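(* Let $\mathcal K$ be a 2-category. (1) The following data form a 2-category $\mathrm{Mnd}^\iota(\mathcal K)$: 0-cells are monads in $\mathcal K$; 1-cells $t\to t'$ are the 1-cells $(V,\psi)$ of $\mathrm{EM}^w(\mathcal K)$; 2-cells $(V,\psi)\Rightarrow(W,\phi)$ are 2-cells $\omega:V\Rightarrow W$ of $\mathcal K$ satisfying $\omega t\ast\psi=W\mu\ast\phi t\ast t'\omega t\ast t'\psi\ast t'\eta'V$; horizontal and vertical compositions are those of $\mathcal K$. Moreover there is a 2-functor $G^\iota:\mathrm{Mnd}^\iota(\mathcal K)\to\mathrm{EM}^w(\mathcal K)$ which is the identity on 0-cells and 1-cells and sends a 2-cell $\omega:(V,\psi)\Rightarrow(W,\phi)$ to $\omega t\ast\psi\ast\eta'V$. (2) The following data form a 2-category $\mathrm{Mnd}^\pi(\mathcal K)$: 0-cells are monads in $\mathcal K$; 1-cells are the 1-cells of $\mathrm{EM}^w(\mathcal K)$; 2-cells $(V,\psi)\Rightarrow(W,\phi)$ are 2-cells $\omega:V\Rightarrow W$ of $\mathcal K$ satisfying $\phi\ast t'\omega=W\mu\ast\phi t\ast\eta'Wt\ast\omega t\ast\psi$; compositions are those of $\mathcal K$. Moreover there is a 2-functor $G^\pi:\mathrm{Mnd}^\pi(\mathcal K)\to\mathrm{EM}^w(\mathcal K)$ which is the identity on 0-cells and 1-cells and sends $\omega$ to $\phi\ast\eta'W\ast\omega$.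
   Context: Conventions in a 2-category $\mathcal K$: horizontal composition and whiskering by juxtaposition in the order of functor composition; identity 1-cell of $k$ written $k$, identity 2-cell of $V$ written $V$; vertical composition $\ast$ with $\alpha\ast\beta$ meaning $\beta$ then $\alpha$. A monad $(t,\mu,\eta)$ on $k$: $t:k\to k$, $\mu:tt\Rightarrow t$, $\eta:k\Rightarrow t$, associative and unital; in the 2-categories below, horizontal composite of 1-cells $(V,\psi):t\to t'$ and $(V',\psi'):t'\to t''$ is $(V'V,V'\psi\ast\psi'V)$ and the identity 1-cell on $(t,\mu,\eta)$ (on $k$) is $(k,t)$. The 2-category $\mathrm{EM}^w(\mathcal K)$: 0-cells are monads; a 1-cell $(t,\mu,\eta)\to(t',\mu',\eta')$ ($t$ on $k$, $t'$ on $k'$) is $(V,\psi)$, $V:k\to k'$, $\psi:t'V\Rightarrow Vt$, with $V\mu\ast\psi t\ast t'\psi=\psi\ast\mu'V$; a 2-cell $(V,\psi)\Rightarrow(W,\phi)$ is $\varrho:V\Rightarrow Wt$ with $W\mu\ast\varrho t\ast\psi=W\mu\ast\phi t\ast t'\varrho$ and $\varrho=W\mu\ast\phi t\ast\eta'Wt\ast\varrho$; identity 2-cell on $(W,\phi)$ is $\phi\ast\eta'W$; horizontal composite of 2-cells $\varrho:(V,\psi)\Rightarrow(W,\phi)$, $\varrho':(V',\psi')\Rightarrow(W',\phi')$ is $W'W\mu\ast W'\varrho t\ast W'\psi\ast\varrho'V$; vertical composite of $\varrho$ and $\tau:(W,\phi)\Rightarrow(U,\theta)$ is $U\mu\ast\tau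 t\ast\varrho$. *)

theory Defs
  imports Main
begin

text \<open>Composition is
written in the order of functor composition: tc_comp1 g f is g after f,
tc_hcomp beta alpha is beta alpha, tc_vcomp beta alpha is alpha then beta.\<close>

record ('o, 'a, 'c) two_cat =
  tc_ob    :: "'o set"
  tc_hom   :: "'a set"
  tc_cell  :: "'c set"
  tc_src1  :: "'a \<Rightarrow> 'o"
  tc_tgt1  :: "'a \<Rightarrow> 'o"
  tc_src2  :: "'c \<Rightarrow> 'a"
  tc_tgt2  :: "'c \<Rightarrow> 'a"
  tc_id1   :: "'o \<Rightarrow> 'a"
  tc_id2   :: "'a \<Rightarrow> 'c"
  tc_comp1 :: "'a \<Rightarrow> 'a \<Rightarrow> 'a"
  tc_hcomp :: "'c \<Rightarrow> 'c \<Rightarrow> 'c"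
  tc_vcomp :: "'c \<Rightarrow> 'c \<Rightarrow> 'c"

definition two_category :: "('o, 'a, 'c, 'm) two_cat_scheme \<Rightarrow> bool" where
  "two_category K \<longleftrightarrow>
    (\<forall>x\<in>tc_ob K. tc_id1 K x \<in> tc_hom K \<and> tc_src1 K (tc_id1 K x) = x \<and> tc_tgt1 K (tc_id1 K x) = x) \<and>
    (\<forall>f\<in>tc_hom K. tc_src1 K f \<in> tc_ob K \<and> tc_tgt1 K f \<in> tc_ob K) \<and>
    (\<forall>f\<in>tc_hom K. \<forall>g\<in>tc_hom K. tc_src1 K g = tc_tgt1 K f \<longrightarrow>
        tc_comp1 K g f \<in> tc_hom K \<and> tc_src1 K (tc_comp1 K g f) = tc_src1 K f
        \<and> tc_tgt1 K (tc_comp1 K g f) = tc_tgt1 K g) \<and>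
    (\<forall>f\<in>tc_hom K. tc_comp1 K (tc_id1 K (tc_tgt1 K f)) f = f \<and> tc_comp1 K f (tc_id1 K (tc_src1 K f)) = f) \<and>
    (\<forall>f\<in>tc_hom K. \<forall>g\<in>tc_hom K. \<forall>h\<in>tc_hom K.
        tc_src1 K g = tc_tgt1 K f \<longrightarrow> tc_src1 K h = tc_tgt1 K g \<longrightarrow>
        tc_comp1 K h (tc_comp1 K g f) = tc_comp1 K (tc_comp1 K h g) f) \<and>
    (\<forall>\<alpha>\<in>tc_cell K. tc_src2 K \<alpha> \<in> tc_hom K \<and> tc_tgt2 K \<alpha> \<in> tc_hom K
        \<and> tc_src1 K (tc_src2 K \<alpha>) = tc_src1 K (tc_tgt2 K \<alpha>)
        \<and> tc_tgt1 K (tc_src2 K \<alpha>) = tc_tgt1 K (tc_tgt2 K \<alpha>)) \<and>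
    (\<forall>f\<in>tc_hom K. tc_id2 K f \<in> tc_cell K \<and> tc_src2 K (tc_id2 K f) = f \<and> tc_tgt2 K (tc_id2 K f) = f) \<and>
    (\<forall>\<alpha>\<in>tc_cell K. \<forall>\<beta>\<in>tc_cell K. tc_src2 K \<beta> = tc_tgt2 K \<alpha> \<longrightarrow>
        tc_vcomp K \<beta> \<alpha> \<in> tc_cell K \<and> tc_src2 K (tc_vcomp K \<beta> \<alpha>) = tc_src2 K \<alpha>
        \<and> tc_tgt2 K (tc_vcomp K \<beta> \<alpha>) = tc_tgt2 K \<beta>) \<and>
    (\<forall>\<alpha>\<in>tc_cell K. tc_vcomp K (tc_id2 K (tc_tgt2 K \<alpha>)) \<alpha> = \<alpha>
        \<and> tc_vcomp K \<alpha> (tc_id2 K (tc_src2 K \<alpha>)) = \<alpha>) \<and>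
    (\<forall>\<alpha>\<in>tc_cell K. \<forall>\<beta>\<in>tc_cell K. \<forall>\<gamma>\<in>tc_cell K.
        tc_src2 K \<beta> = tc_tgt2 K \<alpha> \<longrightarrow> tc_src2 K \<gamma> = tc_tgt2 K \<beta> \<longrightarrow>
        tc_vcomp K \<gamma> (tc_vcomp K \<beta> \<alpha>) = tc_vcomp K (tc_vcomp K \<gamma> \<beta>) \<alpha>) \<and>
    (\<forall>\<alpha>\<in>tc_cell K. \<forall>\<beta>\<in>tc_cell K. tc_src1 K (tc_src2 K \<beta>) = tc_tgt1 K (tc_src2 K \<alpha>) \<longrightarrow>
        tc_hcomp K \<beta> \<alpha> \<in> tc_cell K
        \<and> tc_src2 K (tc_hcomp K \<beta> \<alpha>) = tc_comp1 K (tc_src2 K \<beta>) (tc_src2 K \<alpha>)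
        \<and> tc_tgt2 K (tc_hcomp K \<beta> \<alpha>) = tc_comp1 K (tc_tgt2 K \<beta>) (tc_tgt2 K \<alpha>)) \<and>
    (\<forall>\<alpha>\<in>tc_cell K. tc_hcomp K (tc_id2 K (tc_id1 K (tc_tgt1 K (tc_src2 K \<alpha>)))) \<alpha> = \<alpha>
        \<and> tc_hcomp K \<alpha> (tc_id2 K (tc_id1 K (tc_src1 K (tc_src2 K \<alpha>)))) = \<alpha>) \<and>
    (\<forall>\<alpha>\<in>tc_cell K. \<forall>\<beta>\<in>tc_cell K. \<forall>\<gamma>\<in>tc_cell K.
        tc_src1 K (tc_src2 K \<beta>) = tc_tgt1 K (tc_src2 K \<alpha>) \<longrightarrow>
        tc_src1 K (tc_src2 K \<gamma>) = tc_tgt1 K (tc_src2 K \<beta>) \<longrightarrow>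
        tc_hcomp K \<gamma> (tc_hcomp K \<beta> \<alpha>) = tc_hcomp K (tc_hcomp K \<gamma> \<beta>) \<alpha>) \<and>
    (\<forall>f\<in>tc_hom K. \<forall>g\<in>tc_hom K. tc_src1 K g = tc_tgt1 K f \<longrightarrow>
        tc_hcomp K (tc_id2 K g) (tc_id2 K f) = tc_id2 K (tc_comp1 K g f)) \<and>
    (\<forall>\<alpha>\<in>tc_cell K. \<forall>\<beta>\<in>tc_cell K. \<forall>\<gamma>\<in>tc_cell K. \<forall>\<delta>\<in>tc_cell K.
        tc_src2 K \<beta> = tc_tgt2 K \<alpha> \<longrightarrow> tc_src2 K \<delta> = tc_tgt2 K \<gamma> \<longrightarrow>
        tc_src1 K (tc_src2 K \<gamma>) = tc_tgt1 K (tc_src2 K \<alpha>) \<longrightarrow>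
        tc_hcomp K (tc_vcomp K \<delta> \<gamma>) (tc_vcomp K \<beta> \<alpha>)
          = tc_vcomp K (tc_hcomp K \<delta> \<beta>) (tc_hcomp K \<gamma> \<alpha>))"

definition two_functor ::
  "('o, 'a, 'c, 'm) two_cat_scheme \<Rightarrow> ('p, 'b, 'd, 'n) two_cat_scheme
   \<Rightarrow> ('o \<Rightarrow> 'p) \<Rightarrow> ('a \<Rightarrow> 'b) \<Rightarrow> ('c \<Rightarrow> 'd) \<Rightarrow> bool" where
  "two_functor K L F0 F1 F2 \<longleftrightarrow>
    (\<forall>x\<in>tc_ob K. F0 x \<in> tc_ob L) \<and>
    (\<forall>f\<in>tc_hom K. F1 f \<in> tc_hom L \<and> tc_src1 L (F1 f) = F0 (tc_src1 K f)
        \<and> tc_tgt1 L (F1 f) = F0 (tc_tgt1 K f)) \<and>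
    (\<forall>\<alpha>\<in>tc_cell K. F2 \<alpha> \<in> tc_cell L \<and> tc_src2 L (F2 \<alpha>) = F1 (tc_src2 K \<alpha>)
        \<and> tc_tgt2 L (F2 \<alpha>) = F1 (tc_tgt2 K \<alpha>)) \<and>
    (\<forall>x\<in>tc_ob K. F1 (tc_id1 K x) = tc_id1 L (F0 x)) \<and>
    (\<forall>f\<in>tc_hom K. \<forall>g\<in>tc_hom K. tc_src1 K g = tc_tgt1 K f \<longrightarrow>
        F1 (tc_comp1 K g f) = tc_comp1 L (F1 g) (F1 f)) \<and>
    (\<forall>f\<in>tc_hom K. F2 (tc_id2 K f) = tc_id2 L (F1 f)) \<and>
    (\<forall>\<alpha>\<in>tc_cell K. \<forall>\<beta>\<in>tc_cell K. tc_src2 K \<beta> = tc_tgt2 K \<alpha> \<longrightarrow>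
        F2 (tc_vcomp K \<beta> \<alpha>) = tc_vcomp L (F2 \<beta>) (F2 \<alpha>)) \<and>
    (\<forall>\<alpha>\<in>tc_cell K. \<forall>\<beta>\<in>tc_cell K. tc_src1 K (tc_src2 K \<beta>) = tc_tgt1 K (tc_src2 K \<alpha>) \<longrightarrow>
        F2 (tc_hcomp K \<beta> \<alpha>) = tc_hcomp L (F2 \<beta>) (F2 \<alpha>))"

definition wl :: "('o, 'a, 'c, 'm) two_cat_scheme \<Rightarrow> 'a \<Rightarrow> 'c \<Rightarrow> 'c" where
  "wl K f \<alpha> = tc_hcomp K (tc_id2 K f) \<alpha>"

definition wr :: "('o, 'a, 'c, 'm) two_cat_scheme \<Rightarrow> 'c \<Rightarrow> 'a \<Rightarrow> 'c" where
  "wr K \<alpha> f = tc_hcomp K \<alpha> (tc_id2 K f)"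

record ('o, 'a, 'c) monad =
  mobj  :: 'o
  mfun  :: 'a
  mmult :: 'c
  munit :: 'c

definition is_monad :: "('o, 'a, 'c, 'm) two_cat_scheme \<Rightarrow> ('o, 'a, 'c) monad \<Rightarrow> bool" where
  "is_monad K m \<longleftrightarrow>
    (let k = mobj m; t = mfun m; \<mu> = mmult m; \<eta> = munit m in
      k \<in> tc_ob K \<and> t \<in> tc_hom K \<and> tc_src1 K t = k \<and> tc_tgt1 K t = k \<and>
      \<mu> \<in> tc_cell K \<and> tc_src2 K \<mu> = tc_comp1 K t t \<and> tc_tgt2 K \<mu> = t \<and>
      \<eta> \<in> tc_cell K \<and> tc_src2 K \<eta> = tc_id1 K k \<and> tc_tgt2 K \<eta> = t \<and>
      tc_vcomp K \<mu> (wr K \<mu> t) = tc_vcomp K \<mu> (wl K t \<mu>) \<and>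
      tc_vcomp K \<mu> (wr K \<eta> t) = tc_id2 K t \<and>
      tc_vcomp K \<mu> (wl K t \<eta>) = tc_id2 K t)"

record ('o, 'a, 'c) mmor =
  msrc :: "('o, 'a, 'c) monad"
  mtgt :: "('o, 'a, 'c) monad"
  mV   :: 'a
  mpsi :: 'c

definition is_em1 :: "('o, 'a, 'c, 'm) two_cat_scheme \<Rightarrow> ('o, 'a, 'c) mmor \<Rightarrow> bool" where
  "is_em1 K f \<longleftrightarrow>
    (let t = mfun (msrc f); \<mu> = mmult (msrc f); t' = mfun (mtgt f); \<mu>' = mmult (mtgt f);
         V = mV f; \<psi> = mpsi f in
      is_monad K (msrc f) \<and> is_monad K (mtgt f) \<and>
      V \<in> tc_hom K \<and> tc_src1 K V = mobj (msrc f) \<and> tc_tgt1 K V = mobj (mtgt f) \<and>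
      \<psi> \<in> tc_cell K \<and> tc_src2 K \<psi> = tc_comp1 K t' V \<and> tc_tgt2 K \<psi> = tc_comp1 K V t \<and>
      tc_vcomp K (wl K V \<mu>) (tc_vcomp K (wr K \<psi> t) (wl K t' \<psi>)) = tc_vcomp K \<psi> (wr K \<mu>' V))"

record ('o, 'a, 'c) mcell =
  csrc :: "('o, 'a, 'c) mmor"
  ctgt :: "('o, 'a, 'c) mmor"
  cval :: 'c

definition parallel_mcell :: "('o, 'a, 'c, 'm) two_cat_scheme \<Rightarrow> ('o, 'a, 'c) mcell \<Rightarrow> bool" where
  "parallel_mcell K c \<longleftrightarrow> is_em1 K (csrc c) \<and> is_em1 K (ctgt c) \<and>
     msrc (csrc c) = msrc (ctgt c) \<and> mtgt (csrc c) = mtgt (ctgt c) \<and> cval c \<in> tc_cell K"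

definition m_id1 :: "('o, 'a, 'c, 'm) two_cat_scheme \<Rightarrow> ('o, 'a, 'c) monad \<Rightarrow> ('o, 'a, 'c) mmor" where
  "m_id1 K m = \<lparr>msrc = m, mtgt = m, mV = tc_id1 K (mobj m), mpsi = tc_id2 K (mfun m)\<rparr>"

definition m_comp1 :: "('o, 'a, 'c, 'm) two_cat_scheme \<Rightarrow> ('o, 'a, 'c) mmor \<Rightarrow> ('o, 'a, 'c) mmor \<Rightarrow> ('o, 'a, 'c) mmor" where
  "m_comp1 K g f = \<lparr>msrc = msrc f, mtgt = mtgt g, mV = tc_comp1 K (mV g) (mV f),
      mpsi = tc_vcomp K (wl K (mV g) (mpsi f)) (wr K (mpsi g) (mV f))\<rparr>"

definition em_cell_cond :: "('o, 'a, 'c, 'm) two_cat_scheme \<Rightarrow> ('o, 'a, 'c) mcell \<Rightarrow> bool" where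
  "em_cell_cond K c \<longleftrightarrow>
    (let t = mfun (msrc (csrc c)); \<mu> = mmult (msrc (csrc c));
         t' = mfun (mtgt (csrc c)); \<eta>' = munit (mtgt (csrc c));
         V = mV (csrc c); \<psi> = mpsi (csrc c); W = mV (ctgt c); \<phi> = mpsi (ctgt c); \<rho> = cval c in
      tc_src2 K \<rho> = V \<and> tc_tgt2 K \<rho> = tc_comp1 K W t \<and>
      tc_vcomp K (wl K W \<mu>) (tc_vcomp K (wr K \<rho> t) \<psi>)
        = tc_vcomp K (wl K W \<mu>) (tc_vcomp K (wr K \<phi> t) (wl K t' \<rho>)) \<and>
      \<rho> = tc_vcomp K (wl K W \<mu>) (tc_vcomp K (wr K \<phi> t) (tc_vcomp K (wr K (wr K \<eta>' W) t) \<rho>)))"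

definition em_w :: "('o, 'a, 'c, 'm) two_cat_scheme \<Rightarrow>
    (('o, 'a, 'c) monad, ('o, 'a, 'c) mmor, ('o, 'a, 'c) mcell) two_cat" where
  "em_w K = \<lparr>
     tc_ob = {m. is_monad K m},
     tc_hom = {f. is_em1 K f},
     tc_cell = {c. parallel_mcell K c \<and> em_cell_cond K c},
     tc_src1 = msrc, tc_tgt1 = mtgt, tc_src2 = csrc, tc_tgt2 = ctgt,
     tc_id1 = m_id1 K,
     tc_id2 = (\<lambda>f. \<lparr>csrc = f, ctgt = f,
                     cval = tc_vcomp K (mpsi f) (wr K (munit (mtgt f)) (mV f))\<rparr>),
     tc_comp1 = m_comp1 K,
     tc_hcomp = (\<lambda>c' c. \<lparr>csrc = m_comp1 K (csrc c') (csrc c), ctgt = m_comp1 K (ctgt c') (ctgt c),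
        cval = (let t = mfun (msrc (csrc c)); \<mu> = mmult (msrc (csrc c));
                    V = mV (csrc c); \<psi> = mpsi (csrc c); W = mV (ctgt c);
                    W' = mV (ctgt c') in
                 tc_vcomp K (wl K (tc_comp1 K W' W) \<mu>)
                  (tc_vcomp K (wl K W' (wr K (cval c) t))
                    (tc_vcomp K (wl K W' \<psi>) (wr K (cval c') V))))\<rparr>),
     tc_vcomp = (\<lambda>d c. \<lparr>csrc = csrc c, ctgt = ctgt d,
        cval = tc_vcomp K (wl K (mV (ctgt d)) (mmult (msrc (csrc c))))
                 (tc_vcomp K (wr K (cval d) (mfun (msrc (csrc c)))) (cval c))\<rparr>)
   \<rparr>"

definition mnd_cat :: "('o, 'a, 'c, 'm) two_cat_scheme \<Rightarrow> (('o, 'a, 'c) mcell \<Rightarrow> bool) \<Rightarrow>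
    (('o, 'a, 'c) monad, ('o, 'a, 'c) mmor, ('o, 'a, 'c) mcell) two_cat" where
  "mnd_cat K P = \<lparr>
     tc_ob = {m. is_monad K m},
     tc_hom = {f. is_em1 K f},
     tc_cell = {c. parallel_mcell K c \<and> tc_src2 K (cval c) = mV (csrc c)
                   \<and> tc_tgt2 K (cval c) = mV (ctgt c) \<and> P c},
     tc_src1 = msrc, tc_tgt1 = mtgt, tc_src2 = csrc, tc_tgt2 = ctgt,
     tc_id1 = m_id1 K,
     tc_id2 = (\<lambda>f. \<lparr>csrc = f, ctgt = f, cval = tc_id2 K (mV f)\<rparr>),
     tc_comp1 = m_comp1 K,
     tc_hcomp = (\<lambda>c' c. \<lparr>csrc = m_comp1 K (csrc c') (csrc c), ctgt = m_comp1 K (ctgt c') (ctgt c),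
                         cval = tc_hcomp K (cval c') (cval c)\<rparr>),
     tc_vcomp = (\<lambda>d c. \<lparr>csrc = csrc c, ctgt = ctgt d, cval = tc_vcomp K (cval d) (cval c)\<rparr>)
   \<rparr>"

definition iota_cond :: "('o, 'a, 'c, 'm) two_cat_scheme \<Rightarrow> ('o, 'a, 'c) mcell \<Rightarrow> bool" where
  "iota_cond K c \<longleftrightarrow>
    (let t = mfun (msrc (csrc c)); \<mu> = mmult (msrc (csrc c));
         t' = mfun (mtgt (csrc c)); \<eta>' = munit (mtgt (csrc c));
         V = mV (csrc c); \<psi> = mpsi (csrc c); W = mV (ctgt c); \<phi> = mpsi (ctgt c); \<omega> = cval c in
      tc_vcomp K (wr K \<omega> t) \<psi>
        = tc_vcomp K (wl K W \<mu>) (tc_vcomp K (wr K \<phi> t) (tc_vcomp K (wl K t' (wr K \<omega> t))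
            (tc_vcomp K (wl K t' \<psi>) (wl K t' (wr K \<eta>' V))))))"

definition pi_cond :: "('o, 'a, 'c, 'm) two_cat_scheme \<Rightarrow> ('o, 'a, 'c) mcell \<Rightarrow> bool" where
  "pi_cond K c \<longleftrightarrow>
    (let t = mfun (msrc (csrc c)); \<mu> = mmult (msrc (csrc c));
         t' = mfun (mtgt (csrc c)); \<eta>' = munit (mtgt (csrc c));
         \<psi> = mpsi (csrc c); W = mV (ctgt c); \<phi> = mpsi (ctgt c); \<omega> = cval c in
      tc_vcomp K \<phi> (wl K t' \<omega>)
        = tc_vcomp K (wl K W \<mu>) (tc_vcomp K (wr K \<phi> t) (tc_vcomp K (wr K (wr K \<eta>' W) t)
            (tc_vcomp K (wr K \<omega> t) \<psi>))))"

definition mnd_iota where "mnd_iota K = mnd_cat K (iota_cond K)"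
definition mnd_pi where "mnd_pi K = mnd_cat K (pi_cond K)"

definition G_iota :: "('o, 'a, 'c, 'm) two_cat_scheme \<Rightarrow> ('o, 'a, 'c) mcell \<Rightarrow> ('o, 'a, 'c) mcell" where
  "G_iota K c = c\<lparr>cval := tc_vcomp K (wr K (cval c) (mfun (msrc (csrc c))))
       (tc_vcomp K (mpsi (csrc c)) (wr K (munit (mtgt (csrc c))) (mV (csrc c))))\<rparr>"

definition G_pi :: "('o, 'a, 'c, 'm) two_cat_scheme \<Rightarrow> ('o, 'a, 'c) mcell \<Rightarrow> ('o, 'a, 'c) mcell" where
  "G_pi K c = c\<lparr>cval := tc_vcomp K (mpsi (ctgt c))
       (tc_vcomp K (wr K (munit (mtgt (csrc c))) (mV (ctgt c))) (cval c))\<rparr>"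

end

theory Submission
  imports Defs
begin

text \<open>
  Both parts are reduced to EM^w(K). Fix EM^w 1-cells (V, \<psi>), (W, \<phi>) : t \<rightarrow> t' and
  \<omega> : V \<Rightarrow> W. Using the monad and 1-cell axioms one computes
  W\<mu> \<ast> (G^\<iota> \<omega>)t \<ast> \<psi> = \<omega>t \<ast> \<psi>  and  W\<mu> \<ast> \<phi>t \<ast> t'(G^\<pi> \<omega>) = \<phi> \<ast> t'\<omega>,
  so the \<iota>-condition (resp. \<pi>-condition) on \<omega> is literally the first 2-cell axiom of EM^w(K)
  for G^\<iota> \<omega> (resp. G^\<pi> \<omega>). The second axiom holds for G^\<pi> \<omega> always and for G^\<iota> \<omega>
  under the \<iota>-condition. Next, G^\<iota> and G^\<pi> carry identities and the vertical and
  horizontal composites of K to those of EM^w(K), and the first 2-cell axiom is stable under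
  the compositions of EM^w(K). Hence the \<iota>- and \<pi>-conditions are closed under identities
  and both compositions, so Mnd^\<iota>(K) and Mnd^\<pi>(K) inherit the 2-category axioms from K,
  and G^\<iota>, G^\<pi> are 2-functors.
\<close>

locale strict_two_category =
  fixes K :: "('o, 'a, 'c) two_cat"
  assumes two_cat: "two_category K"
begin

abbreviation "Ob \<equiv> tc_ob K"
abbreviation "Hom \<equiv> tc_hom K"
abbreviation "Cell \<equiv> tc_cell K"
abbreviation "S1 \<equiv> tc_src1 K"
abbreviation "T1 \<equiv> tc_tgt1 K"
abbreviation "S2 \<equiv> tc_src2 K"
abbreviation "T2 \<equiv> tc_tgt2 K"
abbreviation "I1 \<equiv> tc_id1 K"
abbreviation "I2 \<equiv> tc_id2 K"
abbreviation "C1 \<equiv> tc_comp1 K"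
abbreviation "HC \<equiv> tc_hcomp K"
abbreviation "VC \<equiv> tc_vcomp K"
abbreviation "WL \<equiv> wl K"
abbreviation "WR \<equiv> wr K"

lemmas two_category_axioms = two_cat[unfolded two_category_def]

lemma id1_hom: "x \<in> Ob \<Longrightarrow> I1 x \<in> Hom"
  and id1_src: "x \<in> Ob \<Longrightarrow> S1 (I1 x) = x"
  and id1_tgt: "x \<in> Ob \<Longrightarrow> T1 (I1 x) = x"
  using two_category_axioms by - (elim conjE, simp only: Ball_def)+

lemma hom_src_ob: "f \<in> Hom \<Longrightarrow> S1 f \<in> Ob"
  and hom_tgt_ob: "f \<in> Hom \<Longrightarrow> T1 f \<in> Ob"
  using two_category_axioms by - (elim conjE, simp only: Ball_def)+

lemma comp1_hom: "f \<in> Hom \<Longrightarrow> g \<in> Hom \<Longrightarrow> S1 g = T1 f \<Longrightarrow> C1 g f \<in> Hom"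
  and comp1_src: "f \<in> Hom \<Longrightarrow> g \<in> Hom \<Longrightarrow> S1 g = T1 f \<Longrightarrow> S1 (C1 g f) = S1 f"
  and comp1_tgt: "f \<in> Hom \<Longrightarrow> g \<in> Hom \<Longrightarrow> S1 g = T1 f \<Longrightarrow> T1 (C1 g f) = T1 g"
  using two_category_axioms by - (elim conjE, simp only: Ball_def)+

lemma comp1_id_left: "f \<in> Hom \<Longrightarrow> x = T1 f \<Longrightarrow> C1 (I1 x) f = f"
  and comp1_id_right: "f \<in> Hom \<Longrightarrow> x = S1 f \<Longrightarrow> C1 f (I1 x) = f"
  using two_category_axioms by - (elim conjE, simp only: Ball_def)+

lemma comp1_assoc:
  "f \<in> Hom \<Longrightarrow> g \<in> Hom \<Longrightarrow> h \<in> Hom \<Longrightarrow> S1 g = T1 f \<Longrightarrow> S1 h = T1 g \<Longrightarrow>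
   C1 (C1 h g) f = C1 h (C1 g f)"
  using two_category_axioms by (elim conjE) (simp only: Ball_def)

lemma cell_src_hom: "a \<in> Cell \<Longrightarrow> S2 a \<in> Hom"
  and cell_tgt_hom: "a \<in> Cell \<Longrightarrow> T2 a \<in> Hom"
  and cell_parallel_src: "a \<in> Cell \<Longrightarrow> S1 (T2 a) = S1 (S2 a)"
  and cell_parallel_tgt: "a \<in> Cell \<Longrightarrow> T1 (T2 a) = T1 (S2 a)"
  using two_category_axioms by - (elim conjE, simp only: Ball_def)+

lemma id2_cell: "f \<in> Hom \<Longrightarrow> I2 f \<in> Cell"
  and id2_src: "f \<in> Hom \<Longrightarrow> S2 (I2 f) = f"
  and id2_tgt: "f \<in> Hom \<Longrightarrow> T2 (I2 f) = f"
  using two_category_axioms by - (elim conjE, simp only: Ball_def)+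

lemma vcomp_cell: "a \<in> Cell \<Longrightarrow> b \<in> Cell \<Longrightarrow> S2 b = T2 a \<Longrightarrow> VC b a \<in> Cell"
  and vcomp_src: "a \<in> Cell \<Longrightarrow> b \<in> Cell \<Longrightarrow> S2 b = T2 a \<Longrightarrow> S2 (VC b a) = S2 a"
  and vcomp_tgt: "a \<in> Cell \<Longrightarrow> b \<in> Cell \<Longrightarrow> S2 b = T2 a \<Longrightarrow> T2 (VC b a) = T2 b"
  using two_category_axioms by - (elim conjE, simp only: Ball_def)+

lemma vcomp_id_left: "a \<in> Cell \<Longrightarrow> f = T2 a \<Longrightarrow> VC (I2 f) a = a"
  and vcomp_id_right: "a \<in> Cell \<Longrightarrow> f = S2 a \<Longrightarrow> VC a (I2 f) = a"
  using two_category_axioms by - (elim conjE, simp only: Ball_def)+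

lemma vcomp_assoc:
  "a \<in> Cell \<Longrightarrow> b \<in> Cell \<Longrightarrow> c \<in> Cell \<Longrightarrow> S2 b = T2 a \<Longrightarrow> S2 c = T2 b \<Longrightarrow>
   VC (VC c b) a = VC c (VC b a)"
  using two_category_axioms by (elim conjE) (simp only: Ball_def)

lemma hcomp_cell: "a \<in> Cell \<Longrightarrow> b \<in> Cell \<Longrightarrow> S1 (S2 b) = T1 (S2 a) \<Longrightarrow> HC b a \<in> Cell"
  and hcomp_src: "a \<in> Cell \<Longrightarrow> b \<in> Cell \<Longrightarrow> S1 (S2 b) = T1 (S2 a) \<Longrightarrow> S2 (HC b a) = C1 (S2 b) (S2 a)"
  and hcomp_tgt: "a \<in> Cell \<Longrightarrow> b \<in> Cell \<Longrightarrow> S1 (S2 b) = T1 (S2 a) \<Longrightarrow> T2 (HC b a) = C1 (T2 b) (T2 a)"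
  using two_category_axioms by - (elim conjE, simp only: Ball_def)+

lemma hcomp_id_left: "a \<in> Cell \<Longrightarrow> HC (I2 (I1 (T1 (S2 a)))) a = a"
  and hcomp_id_right: "a \<in> Cell \<Longrightarrow> HC a (I2 (I1 (S1 (S2 a)))) = a"
  using two_category_axioms by - (elim conjE, blast)+

lemma hcomp_assoc:
  "a \<in> Cell \<Longrightarrow> b \<in> Cell \<Longrightarrow> c \<in> Cell \<Longrightarrow> S1 (S2 b) = T1 (S2 a) \<Longrightarrow> S1 (S2 c) = T1 (S2 b) \<Longrightarrow>
   HC c (HC b a) = HC (HC c b) a"
  using two_category_axioms by (elim conjE) (simp only: Ball_def)

lemma hcomp_id2: "f \<in> Hom \<Longrightarrow> g \<in> Hom \<Longrightarrow> S1 g = T1 f \<Longrightarrow> HC (I2 g) (I2 f) = I2 (C1 g f)"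
  using two_category_axioms by (elim conjE) (simp only: Ball_def)

lemma interchange:
  "a \<in> Cell \<Longrightarrow> b \<in> Cell \<Longrightarrow> c \<in> Cell \<Longrightarrow> d \<in> Cell \<Longrightarrow> S2 b = T2 a \<Longrightarrow> S2 d = T2 c \<Longrightarrow>
   S1 (S2 c) = T1 (S2 a) \<Longrightarrow> HC (VC d c) (VC b a) = VC (HC d b) (HC c a)"
  using two_category_axioms by (elim conjE) (simp only: Ball_def)

lemmas [simp] =
  id1_hom id1_src id1_tgt hom_src_ob hom_tgt_ob comp1_hom comp1_src comp1_tgt
  comp1_id_left comp1_id_right comp1_assoc cell_src_hom cell_tgt_hom id2_cell id2_src id2_tgt
  vcomp_cell vcomp_src vcomp_tgt vcomp_id_left vcomp_id_right vcomp_assoc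

subsection \<open>Whiskering\<close>

lemma wl_cell: "f \<in> Hom \<Longrightarrow> a \<in> Cell \<Longrightarrow> S1 f = T1 (S2 a) \<Longrightarrow> WL f a \<in> Cell"
  and wl_src: "f \<in> Hom \<Longrightarrow> a \<in> Cell \<Longrightarrow> S1 f = T1 (S2 a) \<Longrightarrow> S2 (WL f a) = C1 f (S2 a)"
  and wl_tgt: "f \<in> Hom \<Longrightarrow> a \<in> Cell \<Longrightarrow> S1 f = T1 (S2 a) \<Longrightarrow> T2 (WL f a) = C1 f (T2 a)"
  by (simp_all add: wl_def hcomp_cell hcomp_src hcomp_tgt)

lemma wr_cell: "f \<in> Hom \<Longrightarrow> a \<in> Cell \<Longrightarrow> S1 (S2 a) = T1 f \<Longrightarrow> WR a f \<in> Cell"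
  and wr_src: "f \<in> Hom \<Longrightarrow> a \<in> Cell \<Longrightarrow> S1 (S2 a) = T1 f \<Longrightarrow> S2 (WR a f) = C1 (S2 a) f"
  and wr_tgt: "f \<in> Hom \<Longrightarrow> a \<in> Cell \<Longrightarrow> S1 (S2 a) = T1 f \<Longrightarrow> T2 (WR a f) = C1 (T2 a) f"
  by (simp_all add: wr_def hcomp_cell hcomp_src hcomp_tgt)

lemma wl_vcomp: "f \<in> Hom \<Longrightarrow> a \<in> Cell \<Longrightarrow> b \<in> Cell \<Longrightarrow> S2 b = T2 a \<Longrightarrow> S1 f = T1 (S2 a) \<Longrightarrow>
   WL f (VC b a) = VC (WL f b) (WL f a)"
  unfolding wl_def using interchange[of a b "I2 f" "I2 f"] by simp

lemma wr_vcomp: "f \<in> Hom \<Longrightarrow> a \<in> Cell \<Longrightarrow> b \<in> Cell \<Longrightarrow> S2 b = T2 a \<Longrightarrow> S1 (S2 a) = T1 f \<Longrightarrow>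
   WR (VC b a) f = VC (WR b f) (WR a f)"
  unfolding wr_def using interchange[of "I2 f" "I2 f" a b] by simp

lemma wl_wl: "f \<in> Hom \<Longrightarrow> g \<in> Hom \<Longrightarrow> a \<in> Cell \<Longrightarrow> S1 f = T1 g \<Longrightarrow> S1 g = T1 (S2 a) \<Longrightarrow>
   WL f (WL g a) = WL (C1 f g) a"
  unfolding wl_def by (simp add: hcomp_assoc hcomp_id2 hcomp_cell hcomp_src)

lemma wr_wr: "f \<in> Hom \<Longrightarrow> g \<in> Hom \<Longrightarrow> a \<in> Cell \<Longrightarrow> S1 g = T1 f \<Longrightarrow> S1 (S2 a) = T1 g \<Longrightarrow>
   WR (WR a g) f = WR a (C1 g f)"
  unfolding wr_def by (simp add: hcomp_assoc[symmetric] hcomp_id2 hcomp_cell hcomp_src)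

lemma wr_wl: "f \<in> Hom \<Longrightarrow> g \<in> Hom \<Longrightarrow> a \<in> Cell \<Longrightarrow> S1 f = T1 (S2 a) \<Longrightarrow> S1 (S2 a) = T1 g \<Longrightarrow>
   WR (WL f a) g = WL f (WR a g)"
  unfolding wr_def wl_def by (simp add: hcomp_assoc[symmetric] hcomp_id2 hcomp_cell hcomp_src)

lemma wl_id1: "a \<in> Cell \<Longrightarrow> x = T1 (S2 a) \<Longrightarrow> WL (I1 x) a = a"
  unfolding wl_def by (simp add: hcomp_id_left)

lemma wr_id1: "a \<in> Cell \<Longrightarrow> x = S1 (S2 a) \<Longrightarrow> WR a (I1 x) = a"
  unfolding wr_def by (simp add: hcomp_id_right)

lemma wl_id2: "f \<in> Hom \<Longrightarrow> g \<in> Hom \<Longrightarrow> S1 f = T1 g \<Longrightarrow> WL f (I2 g) = I2 (C1 f g)"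
  unfolding wl_def by (simp add: hcomp_id2)

lemma wr_id2: "f \<in> Hom \<Longrightarrow> g \<in> Hom \<Longrightarrow> S1 g = T1 f \<Longrightarrow> WR (I2 g) f = I2 (C1 g f)"
  unfolding wr_def by (simp add: hcomp_id2)

lemmas whisker_simps [simp] = wl_cell wl_src wl_tgt wr_cell wr_src wr_tgt wl_vcomp wr_vcomp
  wl_wl wr_wr wr_wl wl_id1 wr_id1 wl_id2 wr_id2

lemma hcomp_whiskers [simp]:
  assumes "a \<in> Cell" "b \<in> Cell" "S1 (S2 b) = T1 (S2 a)"
  shows "HC b a = VC (WL (T2 b) a) (WR b (S2 a))"
proof -
  have "HC b a = HC (VC (I2 (T2 b)) b) (VC a (I2 (S2 a)))" using assms by simp
  also have "\<dots> = VC (HC (I2 (T2 b)) a) (HC b (I2 (S2 a)))"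
    using assms by (subst interchange) (simp_all add: cell_parallel_src cell_parallel_tgt)
  finally show ?thesis unfolding wl_def wr_def .
qed

lemma whisker_exchange:
  assumes "a \<in> Cell" "b \<in> Cell" "S1 (S2 b) = T1 (S2 a)"
  shows "VC (WL (T2 b) a) (WR b (S2 a)) = VC (WR b (T2 a)) (WL (S2 b) a)"
proof -
  have "HC b a = HC (VC b (I2 (S2 b))) (VC (I2 (T2 a)) a)" using assms by simp
  also have "\<dots> = VC (HC b (I2 (T2 a))) (HC (I2 (S2 b)) a)"
    using assms by (subst interchange) (simp_all add: cell_parallel_src cell_parallel_tgt)
  finally show ?thesis using hcomp_whiskers[OF assms] unfolding wl_def wr_def by simp
qed

text \<open>Rewriting a prefix of a right-nested vertical composite: used as conditional
  simp rules, these replace the first cells of a chain by the right-hand side of an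
  equation, which simp then reassociates.\<close>

lemma vcomp_prefix2:
  assumes "VC a b = r" "x \<in> Cell" "a \<in> Cell" "b \<in> Cell" "S2 b = T2 x" "S2 a = T2 b"
  shows "VC a (VC b x) = VC r x"
  using assms by (simp flip: vcomp_assoc)

lemma vcomp_prefix3:
  assumes "VC a (VC b c) = r" "x \<in> Cell" "a \<in> Cell" "b \<in> Cell" "c \<in> Cell"
    "S2 c = T2 x" "S2 b = T2 c" "S2 a = T2 b"
  shows "VC a (VC b (VC c x)) = VC r x"
  using assms by (simp flip: vcomp_assoc)

lemma vcomp_prefix5:
  assumes "VC a (VC b (VC c (VC d e))) = r" "x \<in> Cell" "a \<in> Cell" "b \<in> Cell" "c \<in> Cell"
    "d \<in> Cell" "e \<in> Cell" "S2 e = T2 x" "S2 d = T2 e" "S2 c = T2 d" "S2 b = T2 c" "S2 a = T2 b"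
  shows "VC a (VC b (VC c (VC d (VC e x)))) = VC r x"
  using assms by (simp flip: vcomp_assoc)

subsection \<open>Monads and EM^w 1-cells in components\<close>

text \<open>The abbreviations spell out, in these components, the cells and conditions used by em_w,
  mnd_iota, mnd_pi, G_iota and G_pi; em_normal is the second (unit) 2-cell axiom of EM^w(K).\<close>

definition monad_typed :: "'o \<Rightarrow> 'a \<Rightarrow> 'c \<Rightarrow> 'c \<Rightarrow> bool" where
  "monad_typed k t \<mu> \<eta> \<longleftrightarrow> k \<in> Ob \<and> t \<in> Hom \<and> S1 t = k \<and> T1 t = k \<and>
   \<mu> \<in> Cell \<and> S2 \<mu> = C1 t t \<and> T2 \<mu> = t \<and> \<eta> \<in> Cell \<and> S2 \<eta> = I1 k \<and> T2 \<eta> = t"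

definition monad_laws :: "'a \<Rightarrow> 'c \<Rightarrow> 'c \<Rightarrow> bool" where
  "monad_laws t \<mu> \<eta> \<longleftrightarrow> VC \<mu> (WR \<mu> t) = VC \<mu> (WL t \<mu>) \<and>
   VC \<mu> (WR \<eta> t) = I2 t \<and> VC \<mu> (WL t \<eta>) = I2 t"

definition em_typed :: "'o \<Rightarrow> 'o \<Rightarrow> 'a \<Rightarrow> 'a \<Rightarrow> 'a \<Rightarrow> 'c \<Rightarrow> bool" where
  "em_typed k k' t t' V \<psi> \<longleftrightarrow> V \<in> Hom \<and> S1 V = k \<and> T1 V = k' \<and> \<psi> \<in> Cell \<and>
   S2 \<psi> = C1 t' V \<and> T2 \<psi> = C1 V t"

definition em_law :: "'a \<Rightarrow> 'c \<Rightarrow> 'a \<Rightarrow> 'c \<Rightarrow> 'a \<Rightarrow> 'c \<Rightarrow> bool" where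
  "em_law t \<mu> t' \<mu>' V \<psi> \<longleftrightarrow>
   VC (WL V \<mu>) (VC (WR \<psi> t) (WL t' \<psi>)) = VC \<psi> (WR \<mu>' V)"

definition two_cell :: "'a \<Rightarrow> 'a \<Rightarrow> 'c \<Rightarrow> bool" where
  "two_cell V W \<omega> \<longleftrightarrow> \<omega> \<in> Cell \<and> S2 \<omega> = V \<and> T2 \<omega> = W"

abbreviation G_iota_cell :: "'a \<Rightarrow> 'c \<Rightarrow> 'a \<Rightarrow> 'c \<Rightarrow> 'c \<Rightarrow> 'c" where
  "G_iota_cell t \<eta>' V \<psi> \<omega> \<equiv> VC (WR \<omega> t) (VC \<psi> (WR \<eta>' V))"

abbreviation G_pi_cell :: "'c \<Rightarrow> 'a \<Rightarrow> 'c \<Rightarrow> 'c \<Rightarrow> 'c" where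
  "G_pi_cell \<eta>' W \<phi> \<omega> \<equiv> VC \<phi> (VC (WR \<eta>' W) \<omega>)"

abbreviation em_vcomp_cell :: "'a \<Rightarrow> 'c \<Rightarrow> 'a \<Rightarrow> 'c \<Rightarrow> 'c \<Rightarrow> 'c" where
  "em_vcomp_cell t \<mu> U \<tau> \<rho> \<equiv> VC (WL U \<mu>) (VC (WR \<tau> t) \<rho>)"

abbreviation em_hcomp_cell :: "'a \<Rightarrow> 'c \<Rightarrow> 'a \<Rightarrow> 'c \<Rightarrow> 'a \<Rightarrow> 'a \<Rightarrow> 'c \<Rightarrow> 'c \<Rightarrow> 'c" where
  "em_hcomp_cell t \<mu> V \<psi> W W' \<rho> \<rho>' \<equiv> VC (WL (C1 W' W) \<mu>) (VC (WL W' (WR \<rho> t)) (VC (WL W' \<psi>) (WR \<rho>' V)))"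

abbreviation em_compatible :: "'a \<Rightarrow> 'c \<Rightarrow> 'a \<Rightarrow> 'c \<Rightarrow> 'a \<Rightarrow> 'c \<Rightarrow> 'c \<Rightarrow> bool" where
  "em_compatible t \<mu> t' \<psi> W \<phi> \<rho> \<equiv>
     VC (WL W \<mu>) (VC (WR \<rho> t) \<psi>) = VC (WL W \<mu>) (VC (WR \<phi> t) (WL t' \<rho>))"

abbreviation em_normal :: "'a \<Rightarrow> 'c \<Rightarrow> 'c \<Rightarrow> 'a \<Rightarrow> 'c \<Rightarrow> 'c \<Rightarrow> bool" where
  "em_normal t \<mu> \<eta>' W \<phi> \<rho> \<equiv> VC (WL W \<mu>) (VC (WR \<phi> t) (VC (WR (WR \<eta>' W) t) \<rho>)) = \<rho>"

abbreviation iota_eqn :: "'a \<Rightarrow> 'c \<Rightarrow> 'a \<Rightarrow> 'c \<Rightarrow> 'a \<Rightarrow> 'c \<Rightarrow> 'a \<Rightarrow> 'c \<Rightarrow> 'c \<Rightarrow> bool" where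
  "iota_eqn t \<mu> t' \<eta>' V \<psi> W \<phi> \<omega> \<equiv>
     VC (WR \<omega> t) \<psi> = VC (WL W \<mu>) (VC (WR \<phi> t) (VC (WL t' (WR \<omega> t)) (VC (WL t' \<psi>) (WL t' (WR \<eta>' V)))))"

abbreviation pi_eqn :: "'a \<Rightarrow> 'c \<Rightarrow> 'a \<Rightarrow> 'c \<Rightarrow> 'c \<Rightarrow> 'a \<Rightarrow> 'c \<Rightarrow> 'c \<Rightarrow> bool" where
  "pi_eqn t \<mu> t' \<eta>' \<psi> W \<phi> \<omega> \<equiv>
     VC \<phi> (WL t' \<omega>) = VC (WL W \<mu>) (VC (WR \<phi> t) (VC (WR (WR \<eta>' W) t) (VC (WR \<omega> t) \<psi>)))"

lemma unit_whisker_commute: assumes "monad_typed k t \<mu> \<eta>" shows "VC (WL t \<eta>) \<eta> = VC (WR \<eta> t) \<eta>"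
proof -
  have [simp]: "k \<in> Ob" "t \<in> Hom" "S1 t = k" "T1 t = k" "\<eta> \<in> Cell" "S2 \<eta> = I1 k" "T2 \<eta> = t"
    using assms by (auto simp: monad_typed_def)
  show ?thesis using whisker_exchange[of \<eta> \<eta>] by simp
qed

lemma unit_whisker_commute_right: assumes "monad_typed k t \<mu> \<eta>" "em_typed k0 k t0 t V \<psi>"
  shows "VC (WR \<eta> (C1 t V)) (WR \<eta> V) = VC (WL t (WR \<eta> V)) (WR \<eta> V)"
  using arg_cong[OF unit_whisker_commute[OF assms(1)], of "\<lambda>x. WR x V"] assms by (simp add: monad_typed_def em_typed_def)

lemma unit_laws_whiskered: assumes "monad_typed k t \<mu> \<eta>" "monad_laws t \<mu> \<eta>" "em_typed k0 k t0 t V \<psi>"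
  shows "VC (WR \<mu> V) (WL t (WR \<eta> V)) = I2 (C1 t V)" "VC (WR \<mu> V) (WR \<eta> (C1 t V)) = I2 (C1 t V)"
  using arg_cong[OF assms(2)[unfolded monad_laws_def, THEN conjunct2, THEN conjunct2], of "\<lambda>x. WR x V"]
    arg_cong[OF assms(2)[unfolded monad_laws_def, THEN conjunct2, THEN conjunct1], of "\<lambda>x. WR x V"]
    assms by (simp_all add: monad_typed_def em_typed_def)

context
  fixes k t \<mu> \<eta> k' t' \<mu>' \<eta>'
  assumes M: "monad_typed k t \<mu> \<eta>" "monad_typed k' t' \<mu>' \<eta>'"
    and LW: "monad_laws t \<mu> \<eta>" "monad_laws t' \<mu>' \<eta>'"
begin

lemma G_iota_absorb:
  assumes V: "em_typed k k' t t' V \<psi>" and VL: "em_law t \<mu> t' \<mu>' V \<psi>" and W: "em_typed k k' t t' W \<phi>"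
    and \<omega>: "two_cell V W \<omega>"
  shows "VC (WL W \<mu>) (VC (WR (G_iota_cell t \<eta>' V \<psi> \<omega>) t) \<psi>) = VC (WR \<omega> t) \<psi>"
proof -
  note [simp] = M[unfolded monad_typed_def] V[unfolded em_typed_def] W[unfolded em_typed_def] \<omega>[unfolded two_cell_def]
  have s1: "VC (WL W \<mu>) (WR \<omega> (C1 t t)) = VC (WR \<omega> t) (WL V \<mu>)" using whisker_exchange[of \<mu> \<omega>] by simp
  have s2: "VC (WR \<eta>' (C1 V t)) \<psi> = VC (WL t' \<psi>) (WR \<eta>' (C1 t' V))"
    using whisker_exchange[of \<psi> \<eta>'] by simp
  note s3 = VL[unfolded em_law_def]
  note s4 = unit_laws_whiskered(2)[OF M(2) LW(2) V]
  have "VC (WL W \<mu>) (VC (WR (VC (WR \<omega> t) (VC \<psi> (WR \<eta>' V))) t) \<psi>)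
     = VC (WL W \<mu>) (VC (WR \<omega> (C1 t t)) (VC (WR \<psi> t) (VC (WR \<eta>' (C1 V t)) \<psi>)))" by simp
  also have "\<dots> = VC (WR \<omega> t) (VC (WL V \<mu>) (VC (WR \<psi> t) (VC (WR \<eta>' (C1 V t)) \<psi>)))"
    by (simp add: vcomp_prefix2[OF s1])
  also have "\<dots> = VC (WR \<omega> t) (VC (WL V \<mu>) (VC (WR \<psi> t) (VC (WL t' \<psi>) (WR \<eta>' (C1 t' V)))))"
    by (simp add: s2)
  also have "\<dots> = VC (WR \<omega> t) (VC \<psi> (VC (WR \<mu>' V) (WR \<eta>' (C1 t' V))))"
    by (simp add: vcomp_prefix3[OF s3])
  also have "\<dots> = VC (WR \<omega> t) \<psi>"
    by (simp add: s4)
  finally show ?thesis .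
qed

lemma G_pi_absorb:
  assumes V: "em_typed k k' t t' V \<psi>" and W: "em_typed k k' t t' W \<phi>" and WL: "em_law t \<mu> t' \<mu>' W \<phi>"
    and \<omega>: "two_cell V W \<omega>"
  shows "VC (WL W \<mu>) (VC (WR \<phi> t) (WL t' (G_pi_cell \<eta>' W \<phi> \<omega>))) = VC \<phi> (WL t' \<omega>)"
proof -
  note [simp] = M[unfolded monad_typed_def] V[unfolded em_typed_def] W[unfolded em_typed_def] \<omega>[unfolded two_cell_def]
  note s3 = WL[unfolded em_law_def]
  note s4 = unit_laws_whiskered(1)[OF M(2) LW(2) W]
  have "VC (WL W \<mu>) (VC (WR \<phi> t) (WL t' (VC \<phi> (VC (WR \<eta>' W) \<omega>))))
     = VC (WL W \<mu>) (VC (WR \<phi> t) (VC (WL t' \<phi>) (VC (WL t' (WR \<eta>' W)) (WL t' \<omega>))))" by simp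
  also have "\<dots> = VC \<phi> (VC (WR \<mu>' W) (VC (WL t' (WR \<eta>' W)) (WL t' \<omega>)))"
    by (simp add: vcomp_prefix3[OF s3])
  also have "\<dots> = VC \<phi> (WL t' \<omega>)"
    by (simp add: vcomp_prefix2[OF s4])
  finally show ?thesis .
qed

lemma G_iota_normal:
  assumes V: "em_typed k k' t t' V \<psi>" and W: "em_typed k k' t t' W \<phi>" and \<omega>: "two_cell V W \<omega>"
    and I: "iota_eqn t \<mu> t' \<eta>' V \<psi> W \<phi> \<omega>"
  shows "em_normal t \<mu> \<eta>' W \<phi> (G_iota_cell t \<eta>' V \<psi> \<omega>)"
proof -
  note [simp] = M[unfolded monad_typed_def] V[unfolded em_typed_def] W[unfolded em_typed_def] \<omega>[unfolded two_cell_def]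
  have e1: "VC (WR \<eta>' (C1 W t)) (WR \<omega> t) = VC (WL t' (WR \<omega> t)) (WR \<eta>' (C1 V t))"
    using whisker_exchange[of "WR \<omega> t" \<eta>'] by simp
  have e2: "VC (WR \<eta>' (C1 V t)) \<psi> = VC (WL t' \<psi>) (WR \<eta>' (C1 t' V))"
    using whisker_exchange[of \<psi> \<eta>'] by simp
  note e3 = unit_whisker_commute_right[OF M(2) V]
  have "VC (WL W \<mu>) (VC (WR \<phi> t) (VC (WR (WR \<eta>' W) t) (VC (WR \<omega> t) (VC \<psi> (WR \<eta>' V)))))
      = VC (WL W \<mu>) (VC (WR \<phi> t) (VC (WL t' (WR \<omega> t)) (VC (WR \<eta>' (C1 V t)) (VC \<psi> (WR \<eta>' V)))))"
    by (simp add: vcomp_prefix2[OF e1])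
  also have "\<dots> = VC (WL W \<mu>) (VC (WR \<phi> t) (VC (WL t' (WR \<omega> t)) (VC (WL t' \<psi>) (VC (WR \<eta>' (C1 t' V)) (WR \<eta>' V)))))"
    by (simp add: vcomp_prefix2[OF e2])
  also have "\<dots> = VC (WL W \<mu>) (VC (WR \<phi> t) (VC (WL t' (WR \<omega> t)) (VC (WL t' \<psi>) (VC (WL t' (WR \<eta>' V)) (WR \<eta>' V)))))"
    by (simp add: e3)
  also have "\<dots> = VC (WR \<omega> t) (VC \<psi> (WR \<eta>' V))"
    using arg_cong[OF I, of "\<lambda>x. VC x (WR \<eta>' V)"] by simp
  finally show ?thesis .
qed

lemma G_pi_normal:
  assumes V: "em_typed k k' t t' V \<psi>" and W: "em_typed k k' t t' W \<phi>" and WL: "em_law t \<mu> t' \<mu>' W \<phi>"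
    and \<omega>: "two_cell V W \<omega>"
  shows "em_normal t \<mu> \<eta>' W \<phi> (G_pi_cell \<eta>' W \<phi> \<omega>)"
proof -
  note [simp] = M[unfolded monad_typed_def] V[unfolded em_typed_def] W[unfolded em_typed_def] \<omega>[unfolded two_cell_def]
  have s1: "VC (WR \<eta>' (C1 W t)) \<phi> = VC (WL t' \<phi>) (WR \<eta>' (C1 t' W))"
    using whisker_exchange[of \<phi> \<eta>'] by simp
  note s2 = unit_whisker_commute_right[OF M(2) W]
  note s3 = WL[unfolded em_law_def]
  note s4 = unit_laws_whiskered(1)[OF M(2) LW(2) W]
  have "VC (WL W \<mu>) (VC (WR \<phi> t) (VC (WR (WR \<eta>' W) t) (VC \<phi> (VC (WR \<eta>' W) \<omega>))))
     = VC (WL W \<mu>) (VC (WR \<phi> t) (VC (WR \<eta>' (C1 W t)) (VC \<phi> (VC (WR \<eta>' W) \<omega>))))" by simp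
  also have "\<dots> = VC (WL W \<mu>) (VC (WR \<phi> t) (VC (WL t' \<phi>) (VC (WR \<eta>' (C1 t' W)) (VC (WR \<eta>' W) \<omega>))))"
    by (simp add: vcomp_prefix2[OF s1])
  also have "\<dots> = VC (WL W \<mu>) (VC (WR \<phi> t) (VC (WL t' \<phi>) (VC (WL t' (WR \<eta>' W)) (VC (WR \<eta>' W) \<omega>))))"
    by (simp add: vcomp_prefix2[OF s2])
  also have "\<dots> = VC \<phi> (VC (WR \<mu>' W) (VC (WL t' (WR \<eta>' W)) (VC (WR \<eta>' W) \<omega>)))"
    by (simp add: vcomp_prefix3[OF s3])
  also have "\<dots> = VC \<phi> (VC (WR \<eta>' W) \<omega>)"
    by (simp add: vcomp_prefix2[OF s4])
  finally show ?thesis .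
qed

lemma em_compatible_vcomp:
  assumes V: "em_typed k k' t t' V \<psi>" and W: "em_typed k k' t t' W \<phi>" and U: "em_typed k k' t t' U \<theta>"
    and \<rho>: "two_cell V (C1 W t) \<rho>" and \<tau>: "two_cell W (C1 U t) \<tau>"
    and compat_\<rho>: "em_compatible t \<mu> t' \<psi> W \<phi> \<rho>" and compat_\<tau>: "em_compatible t \<mu> t' \<phi> U \<theta> \<tau>"
  shows "em_compatible t \<mu> t' \<psi> U \<theta> (em_vcomp_cell t \<mu> U \<tau> \<rho>)"
proof -
  note [simp] = M[unfolded monad_typed_def] V[unfolded em_typed_def] W[unfolded em_typed_def] U[unfolded em_typed_def]
    \<rho>[unfolded two_cell_def] \<tau>[unfolded two_cell_def]
  have as: "VC (WL U \<mu>) (WL U (WR \<mu> t)) = VC (WL U \<mu>) (WL (C1 U t) \<mu>)"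
    using arg_cong[OF LW(1)[unfolded monad_laws_def, THEN conjunct1], of "WL U"] by simp
  have n1: "VC (WL (C1 U t) \<mu>) (WR \<tau> (C1 t t)) = VC (WR \<tau> t) (WL W \<mu>)"
    using whisker_exchange[of \<mu> \<tau>] by simp
  have n2: "VC (WR \<theta> t) (WL (C1 t' U) \<mu>) = VC (WL (C1 U t) \<mu>) (WR \<theta> (C1 t t))"
    using whisker_exchange[of \<mu> \<theta>] by simp
  have compat_\<tau>_whiskered: "VC (WL U (WR \<mu> t)) (VC (WR \<theta> (C1 t t)) (WL t' (WR \<tau> t))) = VC (WL U (WR \<mu> t)) (VC (WR \<tau> (C1 t t)) (WR \<phi> t))"
    using arg_cong[OF compat_\<tau>, of "\<lambda>x. WR x t"] by simp
  have L: "VC (WL U \<mu>) (VC (WR (VC (WL U \<mu>) (VC (WR \<tau> t) \<rho>)) t) \<psi>)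
      = VC (WL U \<mu>) (VC (WR \<tau> t) (VC (WL W \<mu>) (VC (WR \<phi> t) (WL t' \<rho>))))"
  proof -
    have "VC (WL U \<mu>) (VC (WR (VC (WL U \<mu>) (VC (WR \<tau> t) \<rho>)) t) \<psi>)
       = VC (WL U \<mu>) (VC (WL U (WR \<mu> t)) (VC (WR \<tau> (C1 t t)) (VC (WR \<rho> t) \<psi>)))" by simp
    also have "\<dots> = VC (WL U \<mu>) (VC (WL (C1 U t) \<mu>) (VC (WR \<tau> (C1 t t)) (VC (WR \<rho> t) \<psi>)))"
      by (simp add: vcomp_prefix2[OF as])
    also have "\<dots> = VC (WL U \<mu>) (VC (WR \<tau> t) (VC (WL W \<mu>) (VC (WR \<rho> t) \<psi>)))"
      by (simp add: vcomp_prefix2[OF n1])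
    also have "\<dots> = VC (WL U \<mu>) (VC (WR \<tau> t) (VC (WL W \<mu>) (VC (WR \<phi> t) (WL t' \<rho>))))"
      by (simp add: compat_\<rho>)
    finally show ?thesis .
  qed
  have "VC (WL U \<mu>) (VC (WR \<theta> t) (WL t' (VC (WL U \<mu>) (VC (WR \<tau> t) \<rho>))))
      = VC (WL U \<mu>) (VC (WR \<theta> t) (VC (WL (C1 t' U) \<mu>) (VC (WL t' (WR \<tau> t)) (WL t' \<rho>))))" by simp
  also have "\<dots> = VC (WL U \<mu>) (VC (WL (C1 U t) \<mu>) (VC (WR \<theta> (C1 t t)) (VC (WL t' (WR \<tau> t)) (WL t' \<rho>))))"
    by (simp add: vcomp_prefix2[OF n2])
  also have "\<dots> = VC (WL U \<mu>) (VC (WL U (WR \<mu> t)) (VC (WR \<theta> (C1 t t)) (VC (WL t' (WR \<tau> t)) (WL t' \<rho>))))"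
    by (simp add: vcomp_prefix2[OF as[symmetric]])
  also have "\<dots> = VC (WL U \<mu>) (VC (WL U (WR \<mu> t)) (VC (WR \<tau> (C1 t t)) (VC (WR \<phi> t) (WL t' \<rho>))))"
    by (simp add: vcomp_prefix3[OF compat_\<tau>_whiskered])
  also have "\<dots> = VC (WL U \<mu>) (VC (WL (C1 U t) \<mu>) (VC (WR \<tau> (C1 t t)) (VC (WR \<phi> t) (WL t' \<rho>))))"
    by (simp add: vcomp_prefix2[OF as])
  also have "\<dots> = VC (WL U \<mu>) (VC (WR \<tau> t) (VC (WL W \<mu>) (VC (WR \<phi> t) (WL t' \<rho>))))"
    by (simp add: vcomp_prefix2[OF n1])
  finally show ?thesis using L by simp
qed

lemma G_iota_vcomp:
  assumes V: "em_typed k k' t t' V \<psi>" and W: "em_typed k k' t t' W \<phi>" and U: "em_typed k k' t t' U \<theta>"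
    and \<omega>: "two_cell V W \<omega>" and \<omega>': "two_cell W U \<omega>'" and I: "iota_eqn t \<mu> t' \<eta>' V \<psi> W \<phi> \<omega>"
  shows "G_iota_cell t \<eta>' V \<psi> (VC \<omega>' \<omega>)
    = em_vcomp_cell t \<mu> U (G_iota_cell t \<eta>' W \<phi> \<omega>') (G_iota_cell t \<eta>' V \<psi> \<omega>)"
proof -
  note [simp] = M[unfolded monad_typed_def] V[unfolded em_typed_def] W[unfolded em_typed_def] U[unfolded em_typed_def]
    \<omega>[unfolded two_cell_def] \<omega>'[unfolded two_cell_def]
  have X: "VC (WL W \<mu>) (VC (WR \<phi> t) (VC (WR \<eta>' (C1 W t)) (VC (WR \<omega> t) (VC \<psi> (WR \<eta>' V)))))
       = VC (WR \<omega> t) (VC \<psi> (WR \<eta>' V))"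
    using G_iota_normal[OF V W \<omega> I] by simp
  have n1: "VC (WL U \<mu>) (WR \<omega>' (C1 t t)) = VC (WR \<omega>' t) (WL W \<mu>)" using whisker_exchange[of \<mu> \<omega>'] by simp
  have "VC (WL U \<mu>) (VC (WR (VC (WR \<omega>' t) (VC \<phi> (WR \<eta>' W))) t) (VC (WR \<omega> t) (VC \<psi> (WR \<eta>' V))))
     = VC (WL U \<mu>) (VC (WR \<omega>' (C1 t t)) (VC (WR \<phi> t) (VC (WR \<eta>' (C1 W t)) (VC (WR \<omega> t) (VC \<psi> (WR \<eta>' V))))))"
    by simp
  also have "\<dots> = VC (WR \<omega>' t) (VC (WL W \<mu>) (VC (WR \<phi> t) (VC (WR \<eta>' (C1 W t)) (VC (WR \<omega> t) (VC \<psi> (WR \<eta>' V))))))"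
    by (simp add: vcomp_prefix2[OF n1])
  also have "\<dots> = VC (WR \<omega>' t) (VC (WR \<omega> t) (VC \<psi> (WR \<eta>' V)))"
    by (simp only: X)
  finally show ?thesis by simp
qed

lemma G_pi_vcomp:
  assumes V: "em_typed k k' t t' V \<psi>" and W: "em_typed k k' t t' W \<phi>" and U: "em_typed k k' t t' U \<theta>"
    and \<omega>: "two_cell V W \<omega>" and \<omega>': "two_cell W U \<omega>'" and P: "pi_eqn t \<mu> t' \<eta>' \<phi> U \<theta> \<omega>'"
  shows "G_pi_cell \<eta>' U \<theta> (VC \<omega>' \<omega>)
    = em_vcomp_cell t \<mu> U (G_pi_cell \<eta>' U \<theta> \<omega>') (G_pi_cell \<eta>' W \<phi> \<omega>)"
proof -
  note [simp] = M[unfolded monad_typed_def] V[unfolded em_typed_def] W[unfolded em_typed_def] U[unfolded em_typed_def]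
    \<omega>[unfolded two_cell_def] \<omega>'[unfolded two_cell_def]
  have P': "VC (WL U \<mu>) (VC (WR \<theta> t) (VC (WR \<eta>' (C1 U t)) (VC (WR \<omega>' t) \<phi>))) = VC \<theta> (WL t' \<omega>')"
    using P by simp
  have n1: "VC (WL t' \<omega>') (WR \<eta>' W) = VC (WR \<eta>' U) \<omega>'" using whisker_exchange[of \<omega>' \<eta>'] by simp
  have "VC (WL U \<mu>) (VC (WR (VC \<theta> (VC (WR \<eta>' U) \<omega>')) t) (VC \<phi> (VC (WR \<eta>' W) \<omega>)))
      = VC (WL U \<mu>) (VC (WR \<theta> t) (VC (WR \<eta>' (C1 U t)) (VC (WR \<omega>' t) (VC \<phi> (VC (WR \<eta>' W) \<omega>)))))"
    by simp
  also have "\<dots> = VC \<theta> (VC (WL t' \<omega>') (VC (WR \<eta>' W) \<omega>))"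
    by (simp add: vcomp_prefix5[OF P'])
  also have "\<dots> = VC \<theta> (VC (WR \<eta>' U) (VC \<omega>' \<omega>))"
    by (simp add: vcomp_prefix2[OF n1])
  finally show ?thesis by simp
qed

lemma iota_eqn_iff_em_compatible:
  assumes V: "em_typed k k' t t' V \<psi>" and VL: "em_law t \<mu> t' \<mu>' V \<psi>" and W: "em_typed k k' t t' W \<phi>"
    and \<omega>: "two_cell V W \<omega>"
  shows "iota_eqn t \<mu> t' \<eta>' V \<psi> W \<phi> \<omega> \<longleftrightarrow> em_compatible t \<mu> t' \<psi> W \<phi> (G_iota_cell t \<eta>' V \<psi> \<omega>)"
proof -
  note [simp] = M[unfolded monad_typed_def] V[unfolded em_typed_def] W[unfolded em_typed_def] \<omega>[unfolded two_cell_def]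
  show ?thesis by (simp only: G_iota_absorb[OF V VL W \<omega>]) simp
qed

lemma pi_eqn_iff_em_compatible:
  assumes V: "em_typed k k' t t' V \<psi>" and W: "em_typed k k' t t' W \<phi>" and WL: "em_law t \<mu> t' \<mu>' W \<phi>"
    and \<omega>: "two_cell V W \<omega>"
  shows "pi_eqn t \<mu> t' \<eta>' \<psi> W \<phi> \<omega> \<longleftrightarrow> em_compatible t \<mu> t' \<psi> W \<phi> (G_pi_cell \<eta>' W \<phi> \<omega>)"
proof -
  note [simp] = M[unfolded monad_typed_def] V[unfolded em_typed_def] W[unfolded em_typed_def] \<omega>[unfolded two_cell_def]
  show ?thesis by (simp only: G_pi_absorb[OF V W WL \<omega>]) (simp add: eq_commute)
qed

lemma iota_eqn_id2:
  assumes V: "em_typed k k' t t' V \<psi>" and VL: "em_law t \<mu> t' \<mu>' V \<psi>"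
  shows "iota_eqn t \<mu> t' \<eta>' V \<psi> V \<psi> (I2 V)"
proof -
  note [simp] = M[unfolded monad_typed_def] V[unfolded em_typed_def]
  have "two_cell V V (I2 V)" by (simp add: two_cell_def)
  note g = G_pi_absorb[OF V V VL this]
  show ?thesis using g by simp
qed

lemma pi_eqn_id2:
  assumes V: "em_typed k k' t t' V \<psi>" and VL: "em_law t \<mu> t' \<mu>' V \<psi>"
  shows "pi_eqn t \<mu> t' \<eta>' \<psi> V \<psi> (I2 V)"
proof -
  note [simp] = M[unfolded monad_typed_def] V[unfolded em_typed_def]
  have "two_cell V V (I2 V)" by (simp add: two_cell_def)
  note g = G_iota_absorb[OF V VL V this]
  show ?thesis using g by simp
qed

lemma iota_eqn_vcomp:
  assumes V: "em_typed k k' t t' V \<psi>" and VL: "em_law t \<mu> t' \<mu>' V \<psi>"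
    and W: "em_typed k k' t t' W \<phi>" and WL: "em_law t \<mu> t' \<mu>' W \<phi>"
    and U: "em_typed k k' t t' U \<theta>"
    and \<omega>: "two_cell V W \<omega>" and \<omega>': "two_cell W U \<omega>'"
    and I: "iota_eqn t \<mu> t' \<eta>' V \<psi> W \<phi> \<omega>" and I': "iota_eqn t \<mu> t' \<eta>' W \<phi> U \<theta> \<omega>'"
  shows "iota_eqn t \<mu> t' \<eta>' V \<psi> U \<theta> (VC \<omega>' \<omega>)"
proof -
  note [simp] = M[unfolded monad_typed_def] V[unfolded em_typed_def] W[unfolded em_typed_def] U[unfolded em_typed_def]
    \<omega>[unfolded two_cell_def] \<omega>'[unfolded two_cell_def]
  note compat = iota_eqn_iff_em_compatible[OF V VL W \<omega>, THEN iffD1, OF I]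
  note compat' = iota_eqn_iff_em_compatible[OF W WL U \<omega>', THEN iffD1, OF I']
  have G_cell: "two_cell V (C1 W t) (G_iota_cell t \<eta>' V \<psi> \<omega>)" by (simp add: two_cell_def)
  have G_cell': "two_cell W (C1 U t) (G_iota_cell t \<eta>' W \<phi> \<omega>')" by (simp add: two_cell_def)
  note compat_comp = em_compatible_vcomp[OF V W U G_cell G_cell' compat compat']
  note Gv = G_iota_vcomp[OF V W U \<omega> \<omega>' I]
  have c: "em_compatible t \<mu> t' \<psi> U \<theta> (G_iota_cell t \<eta>' V \<psi> (VC \<omega>' \<omega>))"
    unfolding Gv by (rule compat_comp)
  have comp_cell: "two_cell V U (VC \<omega>' \<omega>)" by (simp add: two_cell_def)
  show ?thesis by (rule iota_eqn_iff_em_compatible[OF V VL U comp_cell, THEN iffD2, OF c])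
qed

lemma pi_eqn_vcomp:
  assumes V: "em_typed k k' t t' V \<psi>"
    and W: "em_typed k k' t t' W \<phi>" and WL: "em_law t \<mu> t' \<mu>' W \<phi>"
    and U: "em_typed k k' t t' U \<theta>" and UL: "em_law t \<mu> t' \<mu>' U \<theta>"
    and \<omega>: "two_cell V W \<omega>" and \<omega>': "two_cell W U \<omega>'"
    and P: "pi_eqn t \<mu> t' \<eta>' \<psi> W \<phi> \<omega>" and P': "pi_eqn t \<mu> t' \<eta>' \<phi> U \<theta> \<omega>'"
  shows "pi_eqn t \<mu> t' \<eta>' \<psi> U \<theta> (VC \<omega>' \<omega>)"
proof -
  note [simp] = M[unfolded monad_typed_def] V[unfolded em_typed_def] W[unfolded em_typed_def] U[unfolded em_typed_def]
    \<omega>[unfolded two_cell_def] \<omega>'[unfolded two_cell_def]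
  note compat = pi_eqn_iff_em_compatible[OF V W WL \<omega>, THEN iffD1, OF P]
  note compat' = pi_eqn_iff_em_compatible[OF W U UL \<omega>', THEN iffD1, OF P']
  have G_cell: "two_cell V (C1 W t) (G_pi_cell \<eta>' W \<phi> \<omega>)" by (simp add: two_cell_def)
  have G_cell': "two_cell W (C1 U t) (G_pi_cell \<eta>' U \<theta> \<omega>')" by (simp add: two_cell_def)
  note compat_comp = em_compatible_vcomp[OF V W U G_cell G_cell' compat compat']
  note Gv = G_pi_vcomp[OF V W U \<omega> \<omega>' P']
  have c: "em_compatible t \<mu> t' \<psi> U \<theta> (G_pi_cell \<eta>' U \<theta> (VC \<omega>' \<omega>))"
    unfolding Gv by (rule compat_comp)
  have comp_cell: "two_cell V U (VC \<omega>' \<omega>)" by (simp add: two_cell_def)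
  show ?thesis by (rule pi_eqn_iff_em_compatible[OF V U UL comp_cell, THEN iffD2, OF c])
qed

end

lemma em_typed_comp:
  assumes M: "monad_typed k t \<mu> \<eta>" "monad_typed k' t' \<mu>' \<eta>'" "monad_typed k'' t'' \<mu>'' \<eta>''"
   and V: "em_typed k k' t t' V \<psi>" and V': "em_typed k' k'' t' t'' V' \<psi>'"
  shows "em_typed k k'' t t'' (C1 V' V) (VC (WL V' \<psi>) (WR \<psi>' V))"
  using assms unfolding monad_typed_def em_typed_def by simp

lemma em_law_comp:
  assumes M: "monad_typed k t \<mu> \<eta>" "monad_typed k' t' \<mu>' \<eta>'" "monad_typed k'' t'' \<mu>'' \<eta>''"
   and V: "em_typed k k' t t' V \<psi>" and VL: "em_law t \<mu> t' \<mu>' V \<psi>"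
   and V': "em_typed k' k'' t' t'' V' \<psi>'" and VL': "em_law t' \<mu>' t'' \<mu>'' V' \<psi>'"
  shows "em_law t \<mu> t'' \<mu>'' (C1 V' V) (VC (WL V' \<psi>) (WR \<psi>' V))"
proof -
  note [simp] = M[unfolded monad_typed_def] V[unfolded em_typed_def] V'[unfolded em_typed_def]
  have s1: "VC (WR \<psi>' (C1 V t)) (WL (C1 t'' V') \<psi>) = VC (WL (C1 V' t') \<psi>) (WR \<psi>' (C1 t' V))"
    using whisker_exchange[of \<psi> \<psi>'] by simp
  have s2: "VC (WL (C1 V' V) \<mu>) (VC (WL V' (WR \<psi> t)) (WL (C1 V' t') \<psi>)) = VC (WL V' \<psi>) (WL V' (WR \<mu>' V))"
    using arg_cong[OF VL[unfolded em_law_def], of "WL V'"] by simp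
  have s3: "VC (WL V' (WR \<mu>' V)) (VC (WR \<psi>' (C1 t' V)) (WL t'' (WR \<psi>' V))) = VC (WR \<psi>' V) (WR \<mu>'' (C1 V' V))"
    using arg_cong[OF VL'[unfolded em_law_def], of "\<lambda>x. WR x V"] by simp
  have "VC (WL (C1 V' V) \<mu>) (VC (WR (VC (WL V' \<psi>) (WR \<psi>' V)) t) (WL t'' (VC (WL V' \<psi>) (WR \<psi>' V))))
     = VC (WL (C1 V' V) \<mu>) (VC (WL V' (WR \<psi> t)) (VC (WR \<psi>' (C1 V t)) (VC (WL (C1 t'' V') \<psi>) (WL t'' (WR \<psi>' V)))))"
    by simp
  also have "\<dots> = VC (WL (C1 V' V) \<mu>) (VC (WL V' (WR \<psi> t)) (VC (WL (C1 V' t') \<psi>) (VC (WR \<psi>' (C1 t' V)) (WL t'' (WR \<psi>' V)))))"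
    by (simp add: vcomp_prefix2[OF s1])
  also have "\<dots> = VC (WL V' \<psi>) (VC (WL V' (WR \<mu>' V)) (VC (WR \<psi>' (C1 t' V)) (WL t'' (WR \<psi>' V))))"
    by (simp add: vcomp_prefix3[OF s2])
  also have "\<dots> = VC (WL V' \<psi>) (VC (WR \<psi>' V) (WR \<mu>'' (C1 V' V)))"
    by (simp add: s3)
  finally show ?thesis unfolding em_law_def by simp
qed

lemma G_iota_hcomp:
  assumes M: "monad_typed k t \<mu> \<eta>" "monad_typed k' t' \<mu>' \<eta>'" "monad_typed k'' t'' \<mu>'' \<eta>''"
    and LW: "monad_laws t \<mu> \<eta>" "monad_laws t' \<mu>' \<eta>'"
    and V: "em_typed k k' t t' V \<psi>" and VL: "em_law t \<mu> t' \<mu>' V \<psi>" and W: "em_typed k k' t t' W \<phi>"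
    and V': "em_typed k' k'' t' t'' V' \<psi>'" and W': "em_typed k' k'' t' t'' W' \<phi>'"
    and \<omega>: "two_cell V W \<omega>" and \<omega>': "two_cell V' W' \<omega>'"
  shows "G_iota_cell t \<eta>'' (C1 V' V) (VC (WL V' \<psi>) (WR \<psi>' V)) (HC \<omega>' \<omega>)
    = em_hcomp_cell t \<mu> V \<psi> W W' (G_iota_cell t \<eta>' V \<psi> \<omega>) (G_iota_cell t' \<eta>'' V' \<psi>' \<omega>')"
proof -
  note [simp] = M[unfolded monad_typed_def] V[unfolded em_typed_def] W[unfolded em_typed_def] V'[unfolded em_typed_def]
    W'[unfolded em_typed_def] \<omega>[unfolded two_cell_def] \<omega>'[unfolded two_cell_def]
  have n1: "VC (WL W' \<psi>) (WR \<omega>' (C1 t' V)) = VC (WR \<omega>' (C1 V t)) (WL V' \<psi>)"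
    using whisker_exchange[of \<psi> \<omega>'] by simp
  have n2: "VC (WL W' (WR \<eta>' (C1 V t))) (WR \<omega>' (C1 V t)) = VC (WR \<omega>' (C1 t' (C1 V t))) (WL V' (WR \<eta>' (C1 V t)))"
    using whisker_exchange[of "WR \<eta>' (C1 V t)" \<omega>'] by simp
  have n3: "VC (WL W' (WR \<psi> t)) (WR \<omega>' (C1 t' (C1 V t))) = VC (WR \<omega>' (C1 V (C1 t t))) (WL V' (WR \<psi> t))"
    using whisker_exchange[of "WR \<psi> t" \<omega>'] by simp
  have n4: "VC (WL W' (WR \<omega> (C1 t t))) (WR \<omega>' (C1 V (C1 t t))) = VC (WR \<omega>' (C1 W (C1 t t))) (WL V' (WR \<omega> (C1 t t)))"
    using whisker_exchange[of "WR \<omega> (C1 t t)" \<omega>'] by simp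
  have n5: "VC (WL (C1 W' W) \<mu>) (WR \<omega>' (C1 W (C1 t t))) = VC (WR \<omega>' (C1 W t)) (WL (C1 V' W) \<mu>)"
    using whisker_exchange[of "WL W \<mu>" \<omega>'] by simp
  have g: "VC (WL (C1 V' W) \<mu>) (VC (WL V' (WR \<omega> (C1 t t))) (VC (WL V' (WR \<psi> t)) (VC (WL V' (WR \<eta>' (C1 V t))) (WL V' \<psi>))))
     = VC (WL V' (WR \<omega> t)) (WL V' \<psi>)"
    using arg_cong[OF G_iota_absorb[OF M(1,2) LW(1,2) V VL W \<omega>], of "WL V'"] by simp
  have n7: "VC (WR \<omega>' (C1 W t)) (WL V' (WR \<omega> t)) = VC (WL W' (WR \<omega> t)) (WR \<omega>' (C1 V t))"
    using whisker_exchange[of "WR \<omega> t" \<omega>'] by simp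
  have "VC (WL (C1 W' W) \<mu>) (VC (WL W' (WR (VC (WR \<omega> t) (VC \<psi> (WR \<eta>' V))) t))
        (VC (WL W' \<psi>) (WR (VC (WR \<omega>' t') (VC \<psi>' (WR \<eta>'' V'))) V)))
   = VC (WL (C1 W' W) \<mu>) (VC (WL W' (WR \<omega> (C1 t t))) (VC (WL W' (WR \<psi> t)) (VC (WL W' (WR \<eta>' (C1 V t))) (VC (WL W' \<psi>) (VC (WR \<omega>' (C1 t' V)) (VC (WR \<psi>' V) (WR \<eta>'' (C1 V' V))))))))"
    by simp
  also have "\<dots> = VC (WL (C1 W' W) \<mu>) (VC (WL W' (WR \<omega> (C1 t t))) (VC (WL W' (WR \<psi> t)) (VC (WL W' (WR \<eta>' (C1 V t))) (VC (WR \<omega>' (C1 V t)) (VC (WL V' \<psi>) (VC (WR \<psi>' V) (WR \<eta>'' (C1 V' V))))))))"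
    by (simp add: vcomp_prefix2[OF n1])
  also have "\<dots> = VC (WL (C1 W' W) \<mu>) (VC (WL W' (WR \<omega> (C1 t t))) (VC (WL W' (WR \<psi> t)) (VC (WR \<omega>' (C1 t' (C1 V t))) (VC (WL V' (WR \<eta>' (C1 V t))) (VC (WL V' \<psi>) (VC (WR \<psi>' V) (WR \<eta>'' (C1 V' V))))))))"
    by (simp add: vcomp_prefix2[OF n2])
  also have "\<dots> = VC (WL (C1 W' W) \<mu>) (VC (WL W' (WR \<omega> (C1 t t))) (VC (WR \<omega>' (C1 V (C1 t t))) (VC (WL V' (WR \<psi> t)) (VC (WL V' (WR \<eta>' (C1 V t))) (VC (WL V' \<psi>) (VC (WR \<psi>' V) (WR \<eta>'' (C1 V' V))))))))"
    by (simp add: vcomp_prefix2[OF n3])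
  also have "\<dots> = VC (WL (C1 W' W) \<mu>) (VC (WR \<omega>' (C1 W (C1 t t))) (VC (WL V' (WR \<omega> (C1 t t))) (VC (WL V' (WR \<psi> t)) (VC (WL V' (WR \<eta>' (C1 V t))) (VC (WL V' \<psi>) (VC (WR \<psi>' V) (WR \<eta>'' (C1 V' V))))))))"
    by (simp add: vcomp_prefix2[OF n4])
  also have "\<dots> = VC (WR \<omega>' (C1 W t)) (VC (WL (C1 V' W) \<mu>) (VC (WL V' (WR \<omega> (C1 t t))) (VC (WL V' (WR \<psi> t)) (VC (WL V' (WR \<eta>' (C1 V t))) (VC (WL V' \<psi>) (VC (WR \<psi>' V) (WR \<eta>'' (C1 V' V))))))))"
    by (simp add: vcomp_prefix2[OF n5])
  also have "\<dots> = VC (WR \<omega>' (C1 W t)) (VC (WL V' (WR \<omega> t)) (VC (WL V' \<psi>) (VC (WR \<psi>' V) (WR \<eta>'' (C1 V' V)))))"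
    by (simp add: vcomp_prefix5[OF g])
  also have "\<dots> = VC (WL W' (WR \<omega> t)) (VC (WR \<omega>' (C1 V t)) (VC (WL V' \<psi>) (VC (WR \<psi>' V) (WR \<eta>'' (C1 V' V)))))"
    by (simp add: vcomp_prefix2[OF n7])
  finally show ?thesis by simp
qed

lemma G_pi_hcomp:
  assumes M: "monad_typed k t \<mu> \<eta>" "monad_typed k' t' \<mu>' \<eta>'" "monad_typed k'' t'' \<mu>'' \<eta>''"
    and V: "em_typed k k' t t' V \<psi>" and W: "em_typed k k' t t' W \<phi>"
    and V': "em_typed k' k'' t' t'' V' \<psi>'" and W': "em_typed k' k'' t' t'' W' \<phi>'"
    and \<omega>: "two_cell V W \<omega>" and \<omega>': "two_cell V' W' \<omega>'" and P: "pi_eqn t \<mu> t' \<eta>' \<psi> W \<phi> \<omega>"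
  shows "G_pi_cell \<eta>'' (C1 W' W) (VC (WL W' \<phi>) (WR \<phi>' W)) (HC \<omega>' \<omega>)
    = em_hcomp_cell t \<mu> V \<psi> W W' (G_pi_cell \<eta>' W \<phi> \<omega>) (G_pi_cell \<eta>'' W' \<phi>' \<omega>')"
proof -
  note [simp] = M[unfolded monad_typed_def] V[unfolded em_typed_def] W[unfolded em_typed_def] V'[unfolded em_typed_def]
    W'[unfolded em_typed_def] \<omega>[unfolded two_cell_def] \<omega>'[unfolded two_cell_def]
  have PW: "VC (WL (C1 W' W) \<mu>) (VC (WL W' (WR \<phi> t)) (VC (WL W' (WR \<eta>' (C1 W t))) (VC (WL W' (WR \<omega> t)) (WL W' \<psi>))))
     = VC (WL W' \<phi>) (WL (C1 W' t') \<omega>)"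
    using arg_cong[OF P, of "WL W'"] by simp
  have n1: "VC (WL (C1 W' t') \<omega>) (WR \<phi>' V) = VC (WR \<phi>' W) (WL (C1 t'' W') \<omega>)"
    using whisker_exchange[of \<omega> \<phi>'] by simp
  have n2: "VC (WL (C1 t'' W') \<omega>) (WR \<eta>'' (C1 W' V)) = VC (WR \<eta>'' (C1 W' W)) (WL W' \<omega>)"
    using whisker_exchange[of "WL W' \<omega>" \<eta>''] by simp
  have "VC (WL (C1 W' W) \<mu>) (VC (WL W' (WR (VC \<phi> (VC (WR \<eta>' W) \<omega>)) t))
        (VC (WL W' \<psi>) (WR (VC \<phi>' (VC (WR \<eta>'' W') \<omega>')) V)))
     = VC (WL (C1 W' W) \<mu>) (VC (WL W' (WR \<phi> t)) (VC (WL W' (WR \<eta>' (C1 W t))) (VC (WL W' (WR \<omega> t)) (VC (WL W' \<psi>) (VC (WR \<phi>' V) (VC (WR \<eta>'' (C1 W' V)) (WR \<omega>' V)))))))"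
    by simp
  also have "\<dots> = VC (WL W' \<phi>) (VC (WL (C1 W' t') \<omega>) (VC (WR \<phi>' V) (VC (WR \<eta>'' (C1 W' V)) (WR \<omega>' V))))"
    by (simp add: vcomp_prefix5[OF PW])
  also have "\<dots> = VC (WL W' \<phi>) (VC (WR \<phi>' W) (VC (WL (C1 t'' W') \<omega>) (VC (WR \<eta>'' (C1 W' V)) (WR \<omega>' V))))"
    by (simp add: vcomp_prefix2[OF n1])
  also have "\<dots> = VC (WL W' \<phi>) (VC (WR \<phi>' W) (VC (WR \<eta>'' (C1 W' W)) (VC (WL W' \<omega>) (WR \<omega>' V))))"
    by (simp add: vcomp_prefix2[OF n2])
  finally show ?thesis by simp
qed

lemma em_compatible_hcomp:
  assumes M: "monad_typed k t \<mu> \<eta>" "monad_typed k' t' \<mu>' \<eta>'" "monad_typed k'' t'' \<mu>'' \<eta>''"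
    and LW: "monad_laws t \<mu> \<eta>"
    and V: "em_typed k k' t t' V \<psi>" and VL: "em_law t \<mu> t' \<mu>' V \<psi>" and W: "em_typed k k' t t' W \<phi>"
    and V': "em_typed k' k'' t' t'' V' \<psi>'" and W': "em_typed k' k'' t' t'' W' \<phi>'"
    and \<rho>: "two_cell V (C1 W t) \<rho>" and \<rho>': "two_cell V' (C1 W' t') \<rho>'"
    and compat_\<rho>: "em_compatible t \<mu> t' \<psi> W \<phi> \<rho>" and compat_\<rho>': "em_compatible t' \<mu>' t'' \<psi>' W' \<phi>' \<rho>'"
  shows "em_compatible t \<mu> t'' (VC (WL V' \<psi>) (WR \<psi>' V)) (C1 W' W) (VC (WL W' \<phi>) (WR \<phi>' W))
    (em_hcomp_cell t \<mu> V \<psi> W W' \<rho> \<rho>')"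
proof -
  txt \<open>Both sides are rewritten to W'W\<mu> \<ast> W'\<rho>t \<ast> W'\<psi> \<ast> W'\<mu>'V \<ast> \<phi>'t'V \<ast> t''\<rho>'V.\<close>
  note [simp] = M[unfolded monad_typed_def] V[unfolded em_typed_def] W[unfolded em_typed_def] V'[unfolded em_typed_def]
    W'[unfolded em_typed_def] \<rho>[unfolded two_cell_def] \<rho>'[unfolded two_cell_def]
  have a: "VC (WR \<rho>' (C1 V t)) (WL V' \<psi>) = VC (WL (C1 W' t') \<psi>) (WR \<rho>' (C1 t' V))"
    using whisker_exchange[of \<psi> \<rho>'] by simp
  have as: "VC (WL (C1 W' W) \<mu>) (WL (C1 W' W) (WR \<mu> t)) = VC (WL (C1 W' W) \<mu>) (WL (C1 W' (C1 W t)) \<mu>)"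
    using arg_cong[OF LW[unfolded monad_laws_def, THEN conjunct1], of "WL (C1 W' W)"] by simp
  have nb: "VC (WL (C1 W' (C1 W t)) \<mu>) (WL W' (WR \<rho> (C1 t t))) = VC (WL W' (WR \<rho> t)) (WL (C1 W' V) \<mu>)"
    using arg_cong[OF whisker_exchange[of \<mu> \<rho>], of "WL W'"] by simp
  have cc: "VC (WL (C1 W' V) \<mu>) (VC (WL W' (WR \<psi> t)) (WL (C1 W' t') \<psi>)) = VC (WL W' \<psi>) (WL W' (WR \<mu>' V))"
    using arg_cong[OF VL[unfolded em_law_def], of "WL W'"] by simp
  have d: "VC (WL W' (WR \<mu>' V)) (VC (WR \<rho>' (C1 t' V)) (WR \<psi>' V)) = VC (WL W' (WR \<mu>' V)) (VC (WR \<phi>' (C1 t' V)) (WL t'' (WR \<rho>' V)))"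
    using arg_cong[OF compat_\<rho>', of "\<lambda>x. WR x V"] by simp
  have e1: "VC (WR \<phi>' (C1 W t)) (WL (C1 t'' (C1 W' W)) \<mu>) = VC (WL (C1 W' (C1 t' W)) \<mu>) (WR \<phi>' (C1 W (C1 t t)))"
    using whisker_exchange[of "WL W \<mu>" \<phi>'] by simp
  have e2: "VC (WR \<phi>' (C1 W (C1 t t))) (WL (C1 t'' W') (WR \<rho> t)) = VC (WL (C1 W' t') (WR \<rho> t)) (WR \<phi>' (C1 V t))"
    using whisker_exchange[of "WR \<rho> t" \<phi>'] by simp
  have e3: "VC (WR \<phi>' (C1 V t)) (WL (C1 t'' W') \<psi>) = VC (WL (C1 W' t') \<psi>) (WR \<phi>' (C1 t' V))"
    using whisker_exchange[of \<psi> \<phi>'] by simp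
  have e4: "VC (WL W' (WR \<phi> t)) (WL (C1 W' (C1 t' W)) \<mu>) = VC (WL (C1 W' (C1 W t)) \<mu>) (WL W' (WR \<phi> (C1 t t)))"
    using arg_cong[OF whisker_exchange[of \<mu> \<phi>], of "WL W'"] by simp
  have e6: "VC (WL (C1 W' W) (WR \<mu> t)) (VC (WL W' (WR \<phi> (C1 t t))) (WL (C1 W' t') (WR \<rho> t)))
      = VC (WL (C1 W' W) (WR \<mu> t)) (VC (WL W' (WR \<rho> (C1 t t))) (WL W' (WR \<psi> t)))"
    using arg_cong[OF compat_\<rho>[symmetric], of "\<lambda>x. WL W' (WR x t)"] by simp
  have L: "VC (WL (C1 W' W) \<mu>) (VC (WR (VC (WL (C1 W' W) \<mu>) (VC (WL W' (WR \<rho> t)) (VC (WL W' \<psi>) (WR \<rho>' V)))) t)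
            (VC (WL V' \<psi>) (WR \<psi>' V)))
     = VC (WL (C1 W' W) \<mu>) (VC (WL W' (WR \<rho> t)) (VC (WL W' \<psi>) (VC (WL W' (WR \<mu>' V)) (VC (WR \<phi>' (C1 t' V)) (WL t'' (WR \<rho>' V))))))"
  proof -
    have "VC (WL (C1 W' W) \<mu>) (VC (WR (VC (WL (C1 W' W) \<mu>) (VC (WL W' (WR \<rho> t)) (VC (WL W' \<psi>) (WR \<rho>' V)))) t)
            (VC (WL V' \<psi>) (WR \<psi>' V)))
      = VC (WL (C1 W' W) \<mu>) (VC (WL (C1 W' W) (WR \<mu> t)) (VC (WL W' (WR \<rho> (C1 t t))) (VC (WL W' (WR \<psi> t)) (VC (WR \<rho>' (C1 V t)) (VC (WL V' \<psi>) (WR \<psi>' V))))))"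
      by simp
    also have "\<dots> = VC (WL (C1 W' W) \<mu>) (VC (WL (C1 W' W) (WR \<mu> t)) (VC (WL W' (WR \<rho> (C1 t t))) (VC (WL W' (WR \<psi> t)) (VC (WL (C1 W' t') \<psi>) (VC (WR \<rho>' (C1 t' V)) (WR \<psi>' V))))))"
      by (simp add: vcomp_prefix2[OF a])
    also have "\<dots> = VC (WL (C1 W' W) \<mu>) (VC (WL (C1 W' (C1 W t)) \<mu>) (VC (WL W' (WR \<rho> (C1 t t))) (VC (WL W' (WR \<psi> t)) (VC (WL (C1 W' t') \<psi>) (VC (WR \<rho>' (C1 t' V)) (WR \<psi>' V))))))"
      by (simp add: vcomp_prefix2[OF as])
    also have "\<dots> = VC (WL (C1 W' W) \<mu>) (VC (WL W' (WR \<rho> t)) (VC (WL (C1 W' V) \<mu>) (VC (WL W' (WR \<psi> t)) (VC (WL (C1 W' t') \<psi>) (VC (WR \<rho>' (C1 t' V)) (WR \<psi>' V))))))"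
      by (simp add: vcomp_prefix2[OF nb])
    also have "\<dots> = VC (WL (C1 W' W) \<mu>) (VC (WL W' (WR \<rho> t)) (VC (WL W' \<psi>) (VC (WL W' (WR \<mu>' V)) (VC (WR \<rho>' (C1 t' V)) (WR \<psi>' V)))))"
      by (simp add: vcomp_prefix3[OF cc])
    also have "\<dots> = VC (WL (C1 W' W) \<mu>) (VC (WL W' (WR \<rho> t)) (VC (WL W' \<psi>) (VC (WL W' (WR \<mu>' V)) (VC (WR \<phi>' (C1 t' V)) (WL t'' (WR \<rho>' V))))))"
      by (simp add: d)
    finally show ?thesis .
  qed
  have "VC (WL (C1 W' W) \<mu>) (VC (WR (VC (WL W' \<phi>) (WR \<phi>' W)) t)
            (WL t'' (VC (WL (C1 W' W) \<mu>) (VC (WL W' (WR \<rho> t)) (VC (WL W' \<psi>) (WR \<rho>' V))))))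
    = VC (WL (C1 W' W) \<mu>) (VC (WL W' (WR \<phi> t)) (VC (WR \<phi>' (C1 W t)) (VC (WL (C1 t'' (C1 W' W)) \<mu>) (VC (WL (C1 t'' W') (WR \<rho> t)) (VC (WL (C1 t'' W') \<psi>) (WL t'' (WR \<rho>' V)))))))"
    by simp
  also have "\<dots> = VC (WL (C1 W' W) \<mu>) (VC (WL W' (WR \<phi> t)) (VC (WL (C1 W' (C1 t' W)) \<mu>) (VC (WR \<phi>' (C1 W (C1 t t))) (VC (WL (C1 t'' W') (WR \<rho> t)) (VC (WL (C1 t'' W') \<psi>) (WL t'' (WR \<rho>' V)))))))"
    by (simp add: vcomp_prefix2[OF e1])
  also have "\<dots> = VC (WL (C1 W' W) \<mu>) (VC (WL W' (WR \<phi> t)) (VC (WL (C1 W' (C1 t' W)) \<mu>) (VC (WL (C1 W' t') (WR \<rho> t)) (VC (WR \<phi>' (C1 V t)) (VC (WL (C1 t'' W') \<psi>) (WL t'' (WR \<rho>' V)))))))"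
    by (simp add: vcomp_prefix2[OF e2])
  also have "\<dots> = VC (WL (C1 W' W) \<mu>) (VC (WL W' (WR \<phi> t)) (VC (WL (C1 W' (C1 t' W)) \<mu>) (VC (WL (C1 W' t') (WR \<rho> t)) (VC (WL (C1 W' t') \<psi>) (VC (WR \<phi>' (C1 t' V)) (WL t'' (WR \<rho>' V)))))))"
    by (simp add: vcomp_prefix2[OF e3])
  also have "\<dots> = VC (WL (C1 W' W) \<mu>) (VC (WL (C1 W' (C1 W t)) \<mu>) (VC (WL W' (WR \<phi> (C1 t t))) (VC (WL (C1 W' t') (WR \<rho> t)) (VC (WL (C1 W' t') \<psi>) (VC (WR \<phi>' (C1 t' V)) (WL t'' (WR \<rho>' V)))))))"
    by (simp add: vcomp_prefix2[OF e4])
  also have "\<dots> = VC (WL (C1 W' W) \<mu>) (VC (WL (C1 W' W) (WR \<mu> t)) (VC (WL W' (WR \<phi> (C1 t t))) (VC (WL (C1 W' t') (WR \<rho> t)) (VC (WL (C1 W' t') \<psi>) (VC (WR \<phi>' (C1 t' V)) (WL t'' (WR \<rho>' V)))))))"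
    by (simp add: vcomp_prefix2[OF as[symmetric]])
  also have "\<dots> = VC (WL (C1 W' W) \<mu>) (VC (WL (C1 W' W) (WR \<mu> t)) (VC (WL W' (WR \<rho> (C1 t t))) (VC (WL W' (WR \<psi> t)) (VC (WL (C1 W' t') \<psi>) (VC (WR \<phi>' (C1 t' V)) (WL t'' (WR \<rho>' V)))))))"
    by (simp add: vcomp_prefix3[OF e6])
  also have "\<dots> = VC (WL (C1 W' W) \<mu>) (VC (WL (C1 W' (C1 W t)) \<mu>) (VC (WL W' (WR \<rho> (C1 t t))) (VC (WL W' (WR \<psi> t)) (VC (WL (C1 W' t') \<psi>) (VC (WR \<phi>' (C1 t' V)) (WL t'' (WR \<rho>' V)))))))"
    by (simp add: vcomp_prefix2[OF as])
  also have "\<dots> = VC (WL (C1 W' W) \<mu>) (VC (WL W' (WR \<rho> t)) (VC (WL (C1 W' V) \<mu>) (VC (WL W' (WR \<psi> t)) (VC (WL (C1 W' t') \<psi>) (VC (WR \<phi>' (C1 t' V)) (WL t'' (WR \<rho>' V)))))))"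
    by (simp add: vcomp_prefix2[OF nb])
  also have "\<dots> = VC (WL (C1 W' W) \<mu>) (VC (WL W' (WR \<rho> t)) (VC (WL W' \<psi>) (VC (WL W' (WR \<mu>' V)) (VC (WR \<phi>' (C1 t' V)) (WL t'' (WR \<rho>' V))))))"
    by (simp add: vcomp_prefix3[OF cc])
  finally show ?thesis using L by simp
qed

lemma iota_eqn_hcomp:
  assumes M: "monad_typed k t \<mu> \<eta>" "monad_typed k' t' \<mu>' \<eta>'" "monad_typed k'' t'' \<mu>'' \<eta>''"
    and LW: "monad_laws t \<mu> \<eta>" "monad_laws t' \<mu>' \<eta>'" "monad_laws t'' \<mu>'' \<eta>''"
    and V: "em_typed k k' t t' V \<psi>" and VL: "em_law t \<mu> t' \<mu>' V \<psi>"
    and W: "em_typed k k' t t' W \<phi>"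
    and V': "em_typed k' k'' t' t'' V' \<psi>'" and VL': "em_law t' \<mu>' t'' \<mu>'' V' \<psi>'"
    and W': "em_typed k' k'' t' t'' W' \<phi>'"
    and \<omega>: "two_cell V W \<omega>" and \<omega>': "two_cell V' W' \<omega>'"
    and I: "iota_eqn t \<mu> t' \<eta>' V \<psi> W \<phi> \<omega>" and I': "iota_eqn t' \<mu>' t'' \<eta>'' V' \<psi>' W' \<phi>' \<omega>'"
  shows "iota_eqn t \<mu> t'' \<eta>'' (C1 V' V) (VC (WL V' \<psi>) (WR \<psi>' V)) (C1 W' W) (VC (WL W' \<phi>) (WR \<phi>' W))
    (HC \<omega>' \<omega>)"
proof -
  note [simp] = M[unfolded monad_typed_def] V[unfolded em_typed_def] W[unfolded em_typed_def] V'[unfolded em_typed_def]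
    W'[unfolded em_typed_def] \<omega>[unfolded two_cell_def] \<omega>'[unfolded two_cell_def]
  note compat = iota_eqn_iff_em_compatible[OF M(1,2) LW(1,2) V VL W \<omega>, THEN iffD1, OF I]
  note compat' = iota_eqn_iff_em_compatible[OF M(2,3) LW(2,3) V' VL' W' \<omega>', THEN iffD1, OF I']
  have G_cell: "two_cell V (C1 W t) (G_iota_cell t \<eta>' V \<psi> \<omega>)" by (simp add: two_cell_def)
  have G_cell': "two_cell V' (C1 W' t') (G_iota_cell t' \<eta>'' V' \<psi>' \<omega>')" by (simp add: two_cell_def)
  note compat_comp = em_compatible_hcomp[OF M LW(1) V VL W V' W' G_cell G_cell' compat compat']
  note Gh = G_iota_hcomp[OF M LW(1,2) V VL W V' W' \<omega> \<omega>']
  have c: "em_compatible t \<mu> t'' (VC (WL V' \<psi>) (WR \<psi>' V)) (C1 W' W) (VC (WL W' \<phi>) (WR \<phi>' W))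
      (G_iota_cell t \<eta>'' (C1 V' V) (VC (WL V' \<psi>) (WR \<psi>' V)) (HC \<omega>' \<omega>))"
    unfolding Gh by (rule compat_comp)
  have comp_cell: "two_cell (C1 V' V) (C1 W' W) (HC \<omega>' \<omega>)" by (simp add: two_cell_def)
  note Vc = em_typed_comp[OF M V V'] and Wc = em_typed_comp[OF M W W']
  note VcL = em_law_comp[OF M V VL V' VL']
  show ?thesis by (rule iota_eqn_iff_em_compatible[OF M(1,3) LW(1,3) Vc VcL Wc comp_cell, THEN iffD2, OF c])
qed

lemma pi_eqn_hcomp:
  assumes M: "monad_typed k t \<mu> \<eta>" "monad_typed k' t' \<mu>' \<eta>'" "monad_typed k'' t'' \<mu>'' \<eta>''"
    and LW: "monad_laws t \<mu> \<eta>" "monad_laws t' \<mu>' \<eta>'" "monad_laws t'' \<mu>'' \<eta>''"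
    and V: "em_typed k k' t t' V \<psi>" and VL: "em_law t \<mu> t' \<mu>' V \<psi>"
    and W: "em_typed k k' t t' W \<phi>" and WL: "em_law t \<mu> t' \<mu>' W \<phi>"
    and V': "em_typed k' k'' t' t'' V' \<psi>'"
    and W': "em_typed k' k'' t' t'' W' \<phi>'" and WL': "em_law t' \<mu>' t'' \<mu>'' W' \<phi>'"
    and \<omega>: "two_cell V W \<omega>" and \<omega>': "two_cell V' W' \<omega>'"
    and P: "pi_eqn t \<mu> t' \<eta>' \<psi> W \<phi> \<omega>" and P': "pi_eqn t' \<mu>' t'' \<eta>'' \<psi>' W' \<phi>' \<omega>'"
  shows "pi_eqn t \<mu> t'' \<eta>'' (VC (WL V' \<psi>) (WR \<psi>' V)) (C1 W' W) (VC (WL W' \<phi>) (WR \<phi>' W)) (HC \<omega>' \<omega>)"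
proof -
  note [simp] = M[unfolded monad_typed_def] V[unfolded em_typed_def] W[unfolded em_typed_def] V'[unfolded em_typed_def]
    W'[unfolded em_typed_def] \<omega>[unfolded two_cell_def] \<omega>'[unfolded two_cell_def]
  note compat = pi_eqn_iff_em_compatible[OF M(1,2) LW(1,2) V W WL \<omega>, THEN iffD1, OF P]
  note compat' = pi_eqn_iff_em_compatible[OF M(2,3) LW(2,3) V' W' WL' \<omega>', THEN iffD1, OF P']
  have G_cell: "two_cell V (C1 W t) (G_pi_cell \<eta>' W \<phi> \<omega>)" by (simp add: two_cell_def)
  have G_cell': "two_cell V' (C1 W' t') (G_pi_cell \<eta>'' W' \<phi>' \<omega>')" by (simp add: two_cell_def)
  note compat_comp = em_compatible_hcomp[OF M LW(1) V VL W V' W' G_cell G_cell' compat compat']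
  note Gh = G_pi_hcomp[OF M V W V' W' \<omega> \<omega>' P]
  have c: "em_compatible t \<mu> t'' (VC (WL V' \<psi>) (WR \<psi>' V)) (C1 W' W) (VC (WL W' \<phi>) (WR \<phi>' W))
      (G_pi_cell \<eta>'' (C1 W' W) (VC (WL W' \<phi>) (WR \<phi>' W)) (HC \<omega>' \<omega>))"
    unfolding Gh by (rule compat_comp)
  have comp_cell: "two_cell (C1 V' V) (C1 W' W) (HC \<omega>' \<omega>)" by (simp add: two_cell_def)
  note Vc = em_typed_comp[OF M V V'] and Wc = em_typed_comp[OF M W W']
  note WcL = em_law_comp[OF M W WL W' WL']
  show ?thesis by (rule pi_eqn_iff_em_compatible[OF M(1,3) LW(1,3) Vc Wc WcL comp_cell, THEN iffD2, OF c])
qed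

subsection \<open>The 2-categories Mnd^\<iota>(K), Mnd^\<pi>(K) and the 2-functors G^\<iota>, G^\<pi>\<close>

lemma is_monad_iff: "is_monad K m \<longleftrightarrow> monad_typed (mobj m) (mfun m) (mmult m) (munit m) \<and> monad_laws (mfun m) (mmult m) (munit m)"
  by (simp add: is_monad_def monad_typed_def monad_laws_def Let_def conj_ac)

lemma is_em1_iff: "is_em1 K f \<longleftrightarrow> is_monad K (msrc f) \<and> is_monad K (mtgt f) \<and>
   em_typed (mobj (msrc f)) (mobj (mtgt f)) (mfun (msrc f)) (mfun (mtgt f)) (mV f) (mpsi f) \<and>
   em_law (mfun (msrc f)) (mmult (msrc f)) (mfun (mtgt f)) (mmult (mtgt f)) (mV f) (mpsi f)"
  by (simp add: is_em1_def em_typed_def em_law_def Let_def conj_ac)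

lemma is_em1_id: assumes "is_monad K m" shows "is_em1 K (m_id1 K m)"
proof -
  have A: "monad_typed (mobj m) (mfun m) (mmult m) (munit m)" "monad_laws (mfun m) (mmult m) (munit m)"
    using assms is_monad_iff by auto
  note [simp] = A(1)[unfolded monad_typed_def]
  show ?thesis unfolding is_em1_iff m_id1_def using assms by (simp add: em_typed_def em_law_def)
qed

lemma is_em1_comp: assumes "is_em1 K f" "is_em1 K g" "msrc g = mtgt f"
  shows "is_em1 K (m_comp1 K g f)"
proof -
  from assms have F: "is_monad K (msrc f)" "is_monad K (mtgt f)" "is_monad K (mtgt g)"
    "em_typed (mobj (msrc f)) (mobj (mtgt f)) (mfun (msrc f)) (mfun (mtgt f)) (mV f) (mpsi f)"
    "em_law (mfun (msrc f)) (mmult (msrc f)) (mfun (mtgt f)) (mmult (mtgt f)) (mV f) (mpsi f)"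
    "em_typed (mobj (mtgt f)) (mobj (mtgt g)) (mfun (mtgt f)) (mfun (mtgt g)) (mV g) (mpsi g)"
    "em_law (mfun (mtgt f)) (mmult (mtgt f)) (mfun (mtgt g)) (mmult (mtgt g)) (mV g) (mpsi g)"
    unfolding is_em1_iff by auto
  have M: "monad_typed (mobj (msrc f)) (mfun (msrc f)) (mmult (msrc f)) (munit (msrc f))"
     "monad_typed (mobj (mtgt f)) (mfun (mtgt f)) (mmult (mtgt f)) (munit (mtgt f))"
     "monad_typed (mobj (mtgt g)) (mfun (mtgt g)) (mmult (mtgt g)) (munit (mtgt g))"
    using F(1-3) is_monad_iff by auto
  show ?thesis unfolding is_em1_iff m_comp1_def
    using F(1,3) em_typed_comp[OF M F(4) F(6)] em_law_comp[OF M F(4,5,6,7)] by simp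
qed

lemma m_comp1_id_left: assumes "is_em1 K f" shows "m_comp1 K (m_id1 K (mtgt f)) f = f"
proof -
  have "em_typed (mobj (msrc f)) (mobj (mtgt f)) (mfun (msrc f)) (mfun (mtgt f)) (mV f) (mpsi f)"
    "is_monad K (mtgt f)" using assms is_em1_iff by auto
  hence [simp]: "mV f \<in> Hom" "S1 (mV f) = mobj (msrc f)" "T1 (mV f) = mobj (mtgt f)" "mpsi f \<in> Cell"
    "S2 (mpsi f) = C1 (mfun (mtgt f)) (mV f)" "T2 (mpsi f) = C1 (mV f) (mfun (msrc f))"
    "mobj (mtgt f) \<in> Ob" "mfun (mtgt f) \<in> Hom" "S1 (mfun (mtgt f)) = mobj (mtgt f)" "T1 (mfun (mtgt f)) = mobj (mtgt f)"
    by (auto simp: em_typed_def is_monad_iff monad_typed_def)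
  show ?thesis unfolding m_comp1_def m_id1_def by (intro mmor.equality) simp_all
qed

lemma m_comp1_id_right: assumes "is_em1 K f" shows "m_comp1 K f (m_id1 K (msrc f)) = f"
proof -
  have "em_typed (mobj (msrc f)) (mobj (mtgt f)) (mfun (msrc f)) (mfun (mtgt f)) (mV f) (mpsi f)"
    "is_monad K (msrc f)" "is_monad K (mtgt f)" using assms is_em1_iff by auto
  hence [simp]: "mV f \<in> Hom" "S1 (mV f) = mobj (msrc f)" "T1 (mV f) = mobj (mtgt f)" "mpsi f \<in> Cell"
    "S2 (mpsi f) = C1 (mfun (mtgt f)) (mV f)" "T2 (mpsi f) = C1 (mV f) (mfun (msrc f))"
    "mobj (msrc f) \<in> Ob" "mfun (msrc f) \<in> Hom" "S1 (mfun (msrc f)) = mobj (msrc f)" "T1 (mfun (msrc f)) = mobj (msrc f)"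
    "mobj (mtgt f) \<in> Ob" "mfun (mtgt f) \<in> Hom" "S1 (mfun (mtgt f)) = mobj (mtgt f)" "T1 (mfun (mtgt f)) = mobj (mtgt f)"
    by (auto simp: em_typed_def is_monad_iff monad_typed_def)
  show ?thesis unfolding m_comp1_def m_id1_def by (intro mmor.equality) simp_all
qed

lemma em_typedD: "em_typed k k' t t' V \<psi> \<Longrightarrow> V \<in> Hom \<and> S1 V = k \<and> T1 V = k' \<and> \<psi> \<in> Cell \<and> S2 \<psi> = C1 t' V \<and> T2 \<psi> = C1 V t"
  by (simp add: em_typed_def)

lemma m_comp1_assoc: assumes "is_em1 K f" "is_em1 K g" "is_em1 K h" "msrc g = mtgt f" "msrc h = mtgt g"
  shows "m_comp1 K h (m_comp1 K g f) = m_comp1 K (m_comp1 K h g) f"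
proof -
  from assms have F: "is_monad K (msrc f)" "is_monad K (mtgt f)" "is_monad K (mtgt g)" "is_monad K (mtgt h)"
    "em_typed (mobj (msrc f)) (mobj (mtgt f)) (mfun (msrc f)) (mfun (mtgt f)) (mV f) (mpsi f)"
    "em_typed (mobj (mtgt f)) (mobj (mtgt g)) (mfun (mtgt f)) (mfun (mtgt g)) (mV g) (mpsi g)"
    "em_typed (mobj (mtgt g)) (mobj (mtgt h)) (mfun (mtgt g)) (mfun (mtgt h)) (mV h) (mpsi h)"
    unfolding is_em1_iff by auto
  note [simp] = F(1-4)[unfolded is_monad_iff monad_typed_def] F(5-7)[THEN em_typedD]
  show ?thesis unfolding m_comp1_def by (intro mmor.equality) simp_all
qed

lemma m_id1_sel[simp]: "msrc (m_id1 K m) = m" "mtgt (m_id1 K m) = m" "mV (m_id1 K m) = I1 (mobj m)"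
  "mpsi (m_id1 K m) = I2 (mfun m)" by (simp_all add: m_id1_def)

lemma m_comp1_sel[simp]: "msrc (m_comp1 K g f) = msrc f" "mtgt (m_comp1 K g f) = mtgt g"
  "mV (m_comp1 K g f) = C1 (mV g) (mV f)" by (simp_all add: m_comp1_def)

lemma is_em1_mV [simp]:
  "is_em1 K f \<Longrightarrow> mV f \<in> Hom" "is_em1 K f \<Longrightarrow> S1 (mV f) = mobj (msrc f)"
  "is_em1 K f \<Longrightarrow> T1 (mV f) = mobj (mtgt f)"
  by (simp_all add: is_em1_iff em_typed_def)

lemma mnd_cat_cell_iff: "c \<in> tc_cell (mnd_cat K P) \<longleftrightarrow> is_em1 K (csrc c) \<and> is_em1 K (ctgt c) \<and>
   msrc (ctgt c) = msrc (csrc c) \<and> mtgt (ctgt c) = mtgt (csrc c) \<and> cval c \<in> Cell \<and>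
   S2 (cval c) = mV (csrc c) \<and> T2 (cval c) = mV (ctgt c) \<and> P c"
  by (auto simp: mnd_cat_def parallel_mcell_def)

lemma mnd_cat_simps[simp]: "tc_ob (mnd_cat K P) = {m. is_monad K m}" "tc_hom (mnd_cat K P) = {f. is_em1 K f}"
  "tc_src1 (mnd_cat K P) = msrc" "tc_tgt1 (mnd_cat K P) = mtgt"
  "tc_src2 (mnd_cat K P) = csrc" "tc_tgt2 (mnd_cat K P) = ctgt" "tc_id1 (mnd_cat K P) = m_id1 K"
  "tc_id2 (mnd_cat K P) = (\<lambda>f. \<lparr>csrc = f, ctgt = f, cval = I2 (mV f)\<rparr>)"
  "tc_comp1 (mnd_cat K P) = m_comp1 K"
  "tc_hcomp (mnd_cat K P) = (\<lambda>c' c. \<lparr>csrc = m_comp1 K (csrc c') (csrc c), ctgt = m_comp1 K (ctgt c') (ctgt c),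
                         cval = HC (cval c') (cval c)\<rparr>)"
  "tc_vcomp (mnd_cat K P) = (\<lambda>d c. \<lparr>csrc = csrc c, ctgt = ctgt d, cval = VC (cval d) (cval c)\<rparr>)"
  by (simp_all add: mnd_cat_def)

lemma two_category_mnd_cat:
  assumes Pid: "\<And>f. is_em1 K f \<Longrightarrow> P \<lparr>csrc = f, ctgt = f, cval = I2 (mV f)\<rparr>"
    and Pvc: "\<And>c d. c \<in> tc_cell (mnd_cat K P) \<Longrightarrow> d \<in> tc_cell (mnd_cat K P) \<Longrightarrow> csrc d = ctgt c \<Longrightarrow>
      P \<lparr>csrc = csrc c, ctgt = ctgt d, cval = VC (cval d) (cval c)\<rparr>"
    and Phc: "\<And>c d. c \<in> tc_cell (mnd_cat K P) \<Longrightarrow> d \<in> tc_cell (mnd_cat K P) \<Longrightarrow>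
      msrc (csrc d) = mtgt (csrc c) \<Longrightarrow>
      P \<lparr>csrc = m_comp1 K (csrc d) (csrc c), ctgt = m_comp1 K (ctgt d) (ctgt c), cval = HC (cval d) (cval c)\<rparr>"
  shows "two_category (mnd_cat K P)"
  unfolding two_category_def
  apply (intro conjI)
  subgoal by (simp add: mnd_cat_def is_em1_id)
  subgoal by (simp add: mnd_cat_def is_em1_iff)
  subgoal by (simp add: mnd_cat_def is_em1_comp)
  subgoal by (simp add: mnd_cat_def m_comp1_id_left m_comp1_id_right)
  subgoal by (simp add: mnd_cat_def m_comp1_assoc)
  subgoal by (simp add: mnd_cat_def parallel_mcell_def)
  subgoal using Pid by (simp add: mnd_cat_cell_iff)
  subgoal using Pvc by (auto simp: mnd_cat_cell_iff)
  subgoal by (auto simp: mnd_cat_cell_iff intro: mcell.equality)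
  subgoal by (auto simp: mnd_cat_cell_iff)
  subgoal using Phc
    by (auto simp del: hcomp_whiskers simp: mnd_cat_cell_iff hcomp_cell hcomp_src hcomp_tgt is_em1_comp)
  subgoal by (auto simp del: hcomp_whiskers simp: mnd_cat_cell_iff intro!: mcell.equality)
      (metis m_comp1_id_left m_comp1_id_right hcomp_id_left hcomp_id_right is_em1_mV)+
  subgoal by (auto simp del: hcomp_whiskers simp: mnd_cat_cell_iff hcomp_assoc m_comp1_assoc)
  subgoal by (simp del: hcomp_whiskers add: hcomp_id2)
  subgoal by (auto simp del: hcomp_whiskers simp: mnd_cat_cell_iff interchange)
  done

lemma em_w_simps[simp]: "tc_ob (em_w K) = {m. is_monad K m}" "tc_hom (em_w K) = {f. is_em1 K f}"
  "tc_cell (em_w K) = {c. parallel_mcell K c \<and> em_cell_cond K c}"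
  "tc_src1 (em_w K) = msrc" "tc_tgt1 (em_w K) = mtgt"
  "tc_src2 (em_w K) = csrc" "tc_tgt2 (em_w K) = ctgt" "tc_id1 (em_w K) = m_id1 K"
  "tc_comp1 (em_w K) = m_comp1 K"
  by (simp_all add: em_w_def)

lemma em_w_id2: "tc_id2 (em_w K) f = \<lparr>csrc = f, ctgt = f, cval = VC (mpsi f) (WR (munit (mtgt f)) (mV f))\<rparr>"
  by (simp add: em_w_def)

lemma two_functor_into_em_w:
  assumes Gs: "\<And>c. csrc (G c) = csrc c" "\<And>c. ctgt (G c) = ctgt c"
  and Gcell: "\<And>c. c \<in> tc_cell (mnd_cat K P) \<Longrightarrow> cval (G c) \<in> Cell \<and> em_cell_cond K (G c)"
  and Gid: "\<And>f. is_em1 K f \<Longrightarrow> G \<lparr>csrc = f, ctgt = f, cval = I2 (mV f)\<rparr> = tc_id2 (em_w K) f"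
  and Gvc: "\<And>c d. c \<in> tc_cell (mnd_cat K P) \<Longrightarrow> d \<in> tc_cell (mnd_cat K P) \<Longrightarrow> csrc d = ctgt c \<Longrightarrow>
     G \<lparr>csrc = csrc c, ctgt = ctgt d, cval = VC (cval d) (cval c)\<rparr> = tc_vcomp (em_w K) (G d) (G c)"
  and Ghc: "\<And>c d. c \<in> tc_cell (mnd_cat K P) \<Longrightarrow> d \<in> tc_cell (mnd_cat K P) \<Longrightarrow> msrc (csrc d) = mtgt (csrc c) \<Longrightarrow>
     G \<lparr>csrc = m_comp1 K (csrc d) (csrc c), ctgt = m_comp1 K (ctgt d) (ctgt c), cval = HC (cval d) (cval c)\<rparr>
       = tc_hcomp (em_w K) (G d) (G c)"
  shows "two_functor (mnd_cat K P) (em_w K) id id G"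
  unfolding two_functor_def
  apply (intro conjI)
  subgoal by simp
  subgoal by simp
  subgoal using Gcell by (auto simp: Gs mnd_cat_cell_iff parallel_mcell_def)
  subgoal by simp
  subgoal by simp
  subgoal using Gid by simp
  subgoal using Gvc by simp
  subgoal using Ghc by (simp del: hcomp_whiskers)
  done

lemma is_em1D: assumes "is_em1 K f"
  shows "monad_typed (mobj (msrc f)) (mfun (msrc f)) (mmult (msrc f)) (munit (msrc f))"
    "monad_typed (mobj (mtgt f)) (mfun (mtgt f)) (mmult (mtgt f)) (munit (mtgt f))"
    "monad_laws (mfun (msrc f)) (mmult (msrc f)) (munit (msrc f))"
    "monad_laws (mfun (mtgt f)) (mmult (mtgt f)) (munit (mtgt f))"
    "em_typed (mobj (msrc f)) (mobj (mtgt f)) (mfun (msrc f)) (mfun (mtgt f)) (mV f) (mpsi f)"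
    "em_law (mfun (msrc f)) (mmult (msrc f)) (mfun (mtgt f)) (mmult (mtgt f)) (mV f) (mpsi f)"
  using assms by (simp_all add: is_em1_iff is_monad_iff)

lemma mnd_cat_cellD: assumes "c \<in> tc_cell (mnd_cat K P)"
  shows "monad_typed (mobj (msrc (csrc c))) (mfun (msrc (csrc c))) (mmult (msrc (csrc c))) (munit (msrc (csrc c)))"
    "monad_typed (mobj (mtgt (csrc c))) (mfun (mtgt (csrc c))) (mmult (mtgt (csrc c))) (munit (mtgt (csrc c)))"
    "monad_laws (mfun (msrc (csrc c))) (mmult (msrc (csrc c))) (munit (msrc (csrc c)))"
    "monad_laws (mfun (mtgt (csrc c))) (mmult (mtgt (csrc c))) (munit (mtgt (csrc c)))"
    "em_typed (mobj (msrc (csrc c))) (mobj (mtgt (csrc c))) (mfun (msrc (csrc c))) (mfun (mtgt (csrc c))) (mV (csrc c)) (mpsi (csrc c))"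
    "em_law (mfun (msrc (csrc c))) (mmult (msrc (csrc c))) (mfun (mtgt (csrc c))) (mmult (mtgt (csrc c))) (mV (csrc c)) (mpsi (csrc c))"
    "em_typed (mobj (msrc (csrc c))) (mobj (mtgt (csrc c))) (mfun (msrc (csrc c))) (mfun (mtgt (csrc c))) (mV (ctgt c)) (mpsi (ctgt c))"
    "em_law (mfun (msrc (csrc c))) (mmult (msrc (csrc c))) (mfun (mtgt (csrc c))) (mmult (mtgt (csrc c))) (mV (ctgt c)) (mpsi (ctgt c))"
    "two_cell (mV (csrc c)) (mV (ctgt c)) (cval c)"
    "P c" "is_em1 K (csrc c)" "is_em1 K (ctgt c)" "msrc (ctgt c) = msrc (csrc c)" "mtgt (ctgt c) = mtgt (csrc c)"
  using assms is_em1D[of "csrc c"] is_em1D[of "ctgt c"] by (auto simp: mnd_cat_cell_iff two_cell_def)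

lemma two_category_mnd_iota: "two_category (mnd_iota K)"
  unfolding mnd_iota_def
proof (rule two_category_mnd_cat)
  fix f assume f: "is_em1 K f"
  note D = is_em1D[OF f]
  show "iota_cond K \<lparr>csrc = f, ctgt = f, cval = I2 (mV f)\<rparr>"
    unfolding iota_cond_def Let_def mcell.select_convs by (rule iota_eqn_id2[OF D])
next
  fix c d assume c: "c \<in> tc_cell (mnd_cat K (iota_cond K))" and d: "d \<in> tc_cell (mnd_cat K (iota_cond K))"
    and e: "csrc d = ctgt c"
  note D = mnd_cat_cellD[OF c]
  note E = mnd_cat_cellD[OF d, unfolded e D(13) D(14)]
  note I = D(10)[unfolded iota_cond_def Let_def] and I' = E(10)[unfolded iota_cond_def Let_def e D(13) D(14)]
  show "iota_cond K \<lparr>csrc = csrc c, ctgt = ctgt d, cval = VC (cval d) (cval c)\<rparr>"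
    unfolding iota_cond_def Let_def mcell.select_convs
    by (rule iota_eqn_vcomp[OF D(1-4) D(5,6) D(7,8) E(7) D(9) E(9) I I'])
next
  fix c d assume c: "c \<in> tc_cell (mnd_cat K (iota_cond K))" and d: "d \<in> tc_cell (mnd_cat K (iota_cond K))"
    and e: "msrc (csrc d) = mtgt (csrc c)"
  note D = mnd_cat_cellD[OF c]
  note E = mnd_cat_cellD[OF d, unfolded e]
  note I = D(10)[unfolded iota_cond_def Let_def] and I' = E(10)[unfolded iota_cond_def Let_def e]
  show "iota_cond K \<lparr>csrc = m_comp1 K (csrc d) (csrc c), ctgt = m_comp1 K (ctgt d) (ctgt c), cval = HC (cval d) (cval c)\<rparr>"
    unfolding iota_cond_def Let_def mcell.select_convs m_comp1_def mmor.select_convs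
    by (rule iota_eqn_hcomp[OF D(1,2) E(2) D(3,4) E(4) D(5,6) D(7) E(5,6) E(7) D(9) E(9) I I'])
qed

lemma two_category_mnd_pi: "two_category (mnd_pi K)"
  unfolding mnd_pi_def
proof (rule two_category_mnd_cat)
  fix f assume f: "is_em1 K f"
  note D = is_em1D[OF f]
  show "pi_cond K \<lparr>csrc = f, ctgt = f, cval = I2 (mV f)\<rparr>"
    unfolding pi_cond_def Let_def mcell.select_convs by (rule pi_eqn_id2[OF D])
next
  fix c d assume c: "c \<in> tc_cell (mnd_cat K (pi_cond K))" and d: "d \<in> tc_cell (mnd_cat K (pi_cond K))"
    and e: "csrc d = ctgt c"
  note D = mnd_cat_cellD[OF c]
  note E = mnd_cat_cellD[OF d, unfolded e D(13) D(14)]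
  note I = D(10)[unfolded pi_cond_def Let_def] and I' = E(10)[unfolded pi_cond_def Let_def e D(13) D(14)]
  show "pi_cond K \<lparr>csrc = csrc c, ctgt = ctgt d, cval = VC (cval d) (cval c)\<rparr>"
    unfolding pi_cond_def Let_def mcell.select_convs
    by (rule pi_eqn_vcomp[OF D(1-4) D(5) D(7,8) E(7,8) D(9) E(9) I I'])
next
  fix c d assume c: "c \<in> tc_cell (mnd_cat K (pi_cond K))" and d: "d \<in> tc_cell (mnd_cat K (pi_cond K))"
    and e: "msrc (csrc d) = mtgt (csrc c)"
  note D = mnd_cat_cellD[OF c]
  note E = mnd_cat_cellD[OF d, unfolded e]
  note I = D(10)[unfolded pi_cond_def Let_def] and I' = E(10)[unfolded pi_cond_def Let_def e]
  show "pi_cond K \<lparr>csrc = m_comp1 K (csrc d) (csrc c), ctgt = m_comp1 K (ctgt d) (ctgt c), cval = HC (cval d) (cval c)\<rparr>"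
    unfolding pi_cond_def Let_def mcell.select_convs m_comp1_def mmor.select_convs
    by (rule pi_eqn_hcomp[OF D(1,2) E(2) D(3,4) E(4) D(5,6) D(7,8) E(5) E(7,8) D(9) E(9) I I'])
qed

lemma em_w_vcomp: "tc_vcomp (em_w K) d c = \<lparr>csrc = csrc c, ctgt = ctgt d,
        cval = VC (WL (mV (ctgt d)) (mmult (msrc (csrc c)))) (VC (WR (cval d) (mfun (msrc (csrc c)))) (cval c))\<rparr>"
  by (simp add: em_w_def)

lemma em_w_hcomp: "tc_hcomp (em_w K) c' c = \<lparr>csrc = m_comp1 K (csrc c') (csrc c), ctgt = m_comp1 K (ctgt c') (ctgt c),
        cval = VC (WL (C1 (mV (ctgt c')) (mV (ctgt c))) (mmult (msrc (csrc c))))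
                  (VC (WL (mV (ctgt c')) (WR (cval c) (mfun (msrc (csrc c)))))
                    (VC (WL (mV (ctgt c')) (mpsi (csrc c))) (WR (cval c') (mV (csrc c)))))\<rparr>"
  by (simp add: em_w_def Let_def)

lemma mpsi_m_comp1[simp]: "mpsi (m_comp1 K g f) = VC (WL (mV g) (mpsi f)) (WR (mpsi g) (mV f))"
  by (simp add: m_comp1_def)

lemma two_functor_G_iota: "two_functor (mnd_iota K) (em_w K) id id (G_iota K)"
  unfolding mnd_iota_def
proof (rule two_functor_into_em_w)
  fix c show "csrc (G_iota K c) = csrc c" "ctgt (G_iota K c) = ctgt c" by (simp_all add: G_iota_def)
next
  fix c assume c: "c \<in> tc_cell (mnd_cat K (iota_cond K))"
  note D = mnd_cat_cellD[OF c]
  note I = D(10)[unfolded iota_cond_def Let_def]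
  note compat = iota_eqn_iff_em_compatible[OF D(1-4) D(5,6) D(7) D(9), THEN iffD1, OF I]
  note normal = G_iota_normal[OF D(1-4) D(5) D(7) D(9) I]
  note [simp] = D(1,2)[unfolded monad_typed_def] D(5,7)[unfolded em_typed_def] D(9)[unfolded two_cell_def]
  show "cval (G_iota K c) \<in> Cell \<and> em_cell_cond K (G_iota K c)"
    using compat normal by (simp add: G_iota_def em_cell_cond_def Let_def)
next
  fix f assume f: "is_em1 K f"
  note D = is_em1D[OF f]
  note [simp] = D(1,2)[unfolded monad_typed_def] D(5)[unfolded em_typed_def]
  show "G_iota K \<lparr>csrc = f, ctgt = f, cval = I2 (mV f)\<rparr> = tc_id2 (em_w K) f"
    by (simp add: G_iota_def em_w_id2)
next
  fix c d assume c: "c \<in> tc_cell (mnd_cat K (iota_cond K))" and d: "d \<in> tc_cell (mnd_cat K (iota_cond K))"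
    and e: "csrc d = ctgt c"
  note D = mnd_cat_cellD[OF c]
  note E = mnd_cat_cellD[OF d, unfolded e D(13) D(14)]
  note I = D(10)[unfolded iota_cond_def Let_def]
  note Gv = G_iota_vcomp[OF D(1-4) D(5) D(7) E(7) D(9) E(9) I]
  note [simp] = D(1,2)[unfolded monad_typed_def] D(5,7)[unfolded em_typed_def] D(9)[unfolded two_cell_def]
    E(7)[unfolded em_typed_def] E(9)[unfolded two_cell_def] e D(13) D(14)
  show "G_iota K \<lparr>csrc = csrc c, ctgt = ctgt d, cval = VC (cval d) (cval c)\<rparr> = tc_vcomp (em_w K) (G_iota K d) (G_iota K c)"
    using Gv by (simp add: G_iota_def em_w_vcomp)
next
  fix c d assume c: "c \<in> tc_cell (mnd_cat K (iota_cond K))" and d: "d \<in> tc_cell (mnd_cat K (iota_cond K))"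
    and e: "msrc (csrc d) = mtgt (csrc c)"
  note D = mnd_cat_cellD[OF c]
  note E = mnd_cat_cellD[OF d, unfolded e]
  note Gh = G_iota_hcomp[OF D(1,2) E(2) D(3,4) D(5) D(6) D(7) E(5) E(7) D(9) E(9)]
  note [simp] = D(1,2)[unfolded monad_typed_def] E(2)[unfolded monad_typed_def] D(5,7)[unfolded em_typed_def] D(9)[unfolded two_cell_def]
    E(5,7)[unfolded em_typed_def] E(9)[unfolded two_cell_def] e D(13) D(14) E(13) E(14)
  show "G_iota K \<lparr>csrc = m_comp1 K (csrc d) (csrc c), ctgt = m_comp1 K (ctgt d) (ctgt c), cval = HC (cval d) (cval c)\<rparr>
       = tc_hcomp (em_w K) (G_iota K d) (G_iota K c)"
    using Gh by (simp add: G_iota_def em_w_hcomp)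
qed

lemma two_functor_G_pi: "two_functor (mnd_pi K) (em_w K) id id (G_pi K)"
  unfolding mnd_pi_def
proof (rule two_functor_into_em_w)
  fix c show "csrc (G_pi K c) = csrc c" "ctgt (G_pi K c) = ctgt c" by (simp_all add: G_pi_def)
next
  fix c assume c: "c \<in> tc_cell (mnd_cat K (pi_cond K))"
  note D = mnd_cat_cellD[OF c]
  note I = D(10)[unfolded pi_cond_def Let_def]
  note compat = pi_eqn_iff_em_compatible[OF D(1-4) D(5) D(7) D(8) D(9), THEN iffD1, OF I]
  note normal = G_pi_normal[OF D(1-4) D(5) D(7) D(8) D(9)]
  note [simp] = D(1,2)[unfolded monad_typed_def] D(5,7)[unfolded em_typed_def] D(9)[unfolded two_cell_def]
  show "cval (G_pi K c) \<in> Cell \<and> em_cell_cond K (G_pi K c)"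
    using compat normal by (simp add: G_pi_def em_cell_cond_def Let_def)
next
  fix f assume f: "is_em1 K f"
  note D = is_em1D[OF f]
  note [simp] = D(1,2)[unfolded monad_typed_def] D(5)[unfolded em_typed_def]
  show "G_pi K \<lparr>csrc = f, ctgt = f, cval = I2 (mV f)\<rparr> = tc_id2 (em_w K) f"
    by (simp add: G_pi_def em_w_id2)
next
  fix c d assume c: "c \<in> tc_cell (mnd_cat K (pi_cond K))" and d: "d \<in> tc_cell (mnd_cat K (pi_cond K))"
    and e: "csrc d = ctgt c"
  note D = mnd_cat_cellD[OF c]
  note E = mnd_cat_cellD[OF d, unfolded e D(13) D(14)]
  note I' = E(10)[unfolded pi_cond_def Let_def e D(13) D(14)]
  note Gv = G_pi_vcomp[OF D(1-4) D(5) D(7) E(7) D(9) E(9) I']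
  note [simp] = D(1,2)[unfolded monad_typed_def] D(5,7)[unfolded em_typed_def] D(9)[unfolded two_cell_def]
    E(7)[unfolded em_typed_def] E(9)[unfolded two_cell_def] e D(13) D(14)
  show "G_pi K \<lparr>csrc = csrc c, ctgt = ctgt d, cval = VC (cval d) (cval c)\<rparr> = tc_vcomp (em_w K) (G_pi K d) (G_pi K c)"
    using Gv by (simp add: G_pi_def em_w_vcomp)
next
  fix c d assume c: "c \<in> tc_cell (mnd_cat K (pi_cond K))" and d: "d \<in> tc_cell (mnd_cat K (pi_cond K))"
    and e: "msrc (csrc d) = mtgt (csrc c)"
  note D = mnd_cat_cellD[OF c]
  note E = mnd_cat_cellD[OF d, unfolded e]
  note I = D(10)[unfolded pi_cond_def Let_def]
  note Gh = G_pi_hcomp[OF D(1,2) E(2) D(5) D(7) E(5) E(7) D(9) E(9) I]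
  note [simp] = D(1,2)[unfolded monad_typed_def] E(2)[unfolded monad_typed_def] D(5,7)[unfolded em_typed_def] D(9)[unfolded two_cell_def]
    E(5,7)[unfolded em_typed_def] E(9)[unfolded two_cell_def] e D(13) D(14) E(13) E(14)
  show "G_pi K \<lparr>csrc = m_comp1 K (csrc d) (csrc c), ctgt = m_comp1 K (ctgt d) (ctgt c), cval = HC (cval d) (cval c)\<rparr>
       = tc_hcomp (em_w K) (G_pi K d) (G_pi K c)"
    using Gh by (simp add: G_pi_def em_w_hcomp)
qed

end

theorem corollary1p4:
  fixes K :: "('o, 'a, 'c) two_cat"
  assumes "two_category K"
  shows "two_category (mnd_iota K) \<and> two_functor (mnd_iota K) (em_w K) id id (G_iota K) \<and>
         two_category (mnd_pi K) \<and> two_functor (mnd_pi K) (em_w K) id id (G_pi K)"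
proof -
  interpret strict_two_category K by (fact strict_two_category.intro[OF assms])
  show ?thesis using two_category_mnd_iota two_functor_G_iota two_category_mnd_pi two_functor_G_pi by simp
qed

end
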